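(* For $r\ge0$ and $n\ge0$ let \[ h_r(n)=\sum_{\lambda\in\mathcal P_r(n)} a^{(o(\lambda)-o(\delta_r))/2}\,b^{(o(\lambda')-o(\delta_r))/2}\,c^{d(\lambda)-d(\delta_r)}\,d^\lambda(q). \] Then $h(n):=h_r(n)$ does not depend on $r$; it satisfies $h(0)=1$, $h(1)=b+aq^{1/2}$ and, for $n\ge1$, \[ h(n+1)=(b+aq^{1/2})\,h(n)+n\,c(1+q)\,h(n-1); \] and its exponential generating function is \[ \sum_{n\ge0}h(n)\frac{t^n}{n!}=\exp\!\Big((b+aq^{1/2})t+c(1+q)\frac{t^2}{2}\Big). \]
   Context: $a,b,c,q^{1/2}$ are indeterminates. Partitions are identified with Young diagrams; $\lambda'$ is the conjugate. $o(\lambda)$ is the number of odd parts of $\lambda$; $d(\lambda)=\sum_{i=1}^{\lfloor l(\lambda)/2\rfloor}\lfloor\lambda_{2i}/2\rfloor$. A domino is a set of two cells sharing an edge (vertical if in one column). $\delta_r=(r,r-1,\dots,1)$; every partition has a 2-core (obtained by repeatedly removing dominoes while staying a partition) equal to a unique $\delta_r$; $\mathcal P_r(n)$ is the set of partitions with 2-core $\delta_r$ and size $|\delta_r|+2n$. A standard domino tableau of shape $\lambda\in\mathcal P_r(n)$ is a chain $\delta_r=\lambda^0\subset\cdots\subset\lambda^n=\lambda$ with each $\lambda^k/\lambda^{k-1}$ a domino; its spin $sp(D)$ is half the number of vertical dominoes. $d^\lambda(q)=\sum_D q^{sp(D)}$ over all standard domino tableaux of shape $\lambda$. *)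

theory Defs
  imports Complex_Main
begin

definition is_partition :: "nat list \<Rightarrow> bool" where
  "is_partition lam \<longleftrightarrow> sorted_wrt (\<ge>) lam \<and> 0 \<notin> set lam"

text \<open>Young diagram: cell (i,j) = row i, column j (0-indexed).\<close>
definition cells :: "nat list \<Rightarrow> (nat \<times> nat) set" where
  "cells lam = {(i, j). i < length lam \<and> j < lam ! i}"

definition conj_part :: "nat list \<Rightarrow> nat list" where
  "conj_part lam = map (\<lambda>j. card {i. i < length lam \<and> j < lam ! i})
                       [0..<(if lam = [] then 0 else hd lam)]"

definition odd_parts :: "nat list \<Rightarrow> nat" where
  "odd_parts lam = length (filter odd lam)"

text \<open>d(lambda) = sum_{i=1}^{floor(l/2)} floor(lambda_{2i}/2); lambda_{2i} is lam ! (2i-1).\<close>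
definition dstat :: "nat list \<Rightarrow> nat" where
  "dstat lam = (\<Sum>i=1..length lam div 2. (lam ! (2 * i - 1)) div 2)"

definition delta :: "nat \<Rightarrow> nat list" where
  "delta r = rev [1..<r + 1]"

definition vertical_domino :: "(nat \<times> nat) set \<Rightarrow> bool" where
  "vertical_domino D \<longleftrightarrow> (\<exists>i j. D = {(i, j), (Suc i, j)})"

definition horizontal_domino :: "(nat \<times> nat) set \<Rightarrow> bool" where
  "horizontal_domino D \<longleftrightarrow> (\<exists>i j. D = {(i, j), (i, Suc j)})"

definition is_domino :: "(nat \<times> nat) set \<Rightarrow> bool" where
  "is_domino D \<longleftrightarrow> vertical_domino D \<or> horizontal_domino D"

definition dom_step :: "nat list \<Rightarrow> nat list \<Rightarrow> bool" where
  "dom_step mu lam \<longleftrightarrow> is_partition mu \<and> is_partition lam \<and>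
     cells mu \<subseteq> cells lam \<and> is_domino (cells lam - cells mu)"

definition has_two_core :: "nat list \<Rightarrow> nat list \<Rightarrow> bool" where
  "has_two_core lam mu \<longleftrightarrow> is_partition lam \<and> dom_step\<^sup>*\<^sup>* mu lam \<and>
     \<not> (\<exists>nu. dom_step nu mu)"

definition P_set :: "nat \<Rightarrow> nat \<Rightarrow> nat list set" where
  "P_set r n = {lam. is_partition lam \<and> has_two_core lam (delta r) \<and>
                     sum_list lam = sum_list (delta r) + 2 * n}"

text \<open>Standard domino tableaux of shape lam in P_r(n): chains delta r = T!0 ... T!n = lam.\<close>
definition sdt :: "nat \<Rightarrow> nat list \<Rightarrow> nat list list set" where
  "sdt r lam = {T. T \<noteq> [] \<and> hd T = delta r \<and> last T = lam \<and>
                  (\<forall>k < length T - 1. dom_step (T ! k) (T ! Suc k))}"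

definition n_vertical :: "nat list list \<Rightarrow> nat" where
  "n_vertical T = card {k. k < length T - 1 \<and> vertical_domino (cells (T ! Suc k) - cells (T ! k))}"

text \<open>d^lambda(q) with q = s^2 (s stands for q^{1/2}); q^{sp(D)} = s^(number of vertical dominoes).\<close>
definition dpoly :: "complex \<Rightarrow> nat \<Rightarrow> nat list \<Rightarrow> complex" where
  "dpoly s r lam = (\<Sum>T\<in>sdt r lam. s ^ n_vertical T)"

definition hfun :: "complex \<Rightarrow> complex \<Rightarrow> complex \<Rightarrow> complex \<Rightarrow> nat \<Rightarrow> nat \<Rightarrow> complex" where
  "hfun a b c s r n = (\<Sum>lam\<in>P_set r n.
      a powi ((int (odd_parts lam) - int (odd_parts (delta r))) div 2) *
      b powi ((int (odd_parts (conj_part lam)) - int (odd_parts (delta r))) div 2) *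
      c powi (int (dstat lam) - int (dstat (delta r))) *
      dpoly s r lam)"

end

theory Submission
  imports Defs
begin

(* Write a = x^2, b = y^2 and view partitions as Young diagrams, i.e. finite down-closed sets of
   cells. Weight a diagram by x^(odd rows) y^(odd columns) c^(cells with both coordinates odd).
   Then weight(delta_r) h_r(n) is the sum, over the diagrams S with |delta_r| + 2n cells, of
   weight(S) times the spin-weighted number of domino chains from delta_r to S; these numbers are
   obtained from the indicator of delta_r by applying n times the operator "lower", which sums a
   function over the diagrams one domino below a diagram, a vertical domino counting s = q^(1/2).
   Its adjoint "raise" sums over the diagrams one domino above. Two local identities drive the
   proof. First, raise (lower F) = lower (raise F) + (1 + s^2) F, since every diagram has one more
   addable than removable domino of each orientation, while two distinct diagrams of the same
   size have equally many and equally weighted common upper and lower neighbours. Second,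
   raise weight = (y^2 + x^2 s) weight + c lower weight, since adding a horizontal domino in row
   i + 1 and removing one from row i change the odd rows and columns in the same way. As delta_r
   has nothing below it, the first identity gives raise (lower^(n+1) 1_delta) = (n+1)(1 + q)
   lower^n 1_delta, and with the second one h(n + 1) = (b + a s) h(n) + n c (1 + q) h(n - 1):
   the recursion of the Taylor coefficients of exp((b + a s) t + c (1 + q) t^2 / 2). *)

section \<open>Young diagrams as sets of cells\<close>

type_synonym cell = "nat \<times> nat"

definition young :: "cell set \<Rightarrow> bool" where
  "young S \<longleftrightarrow> finite S \<and> (\<forall>i j i' j'. (i, j) \<in> S \<longrightarrow> i' \<le> i \<longrightarrow> j' \<le> j \<longrightarrow> (i', j') \<in> S)"

definition conjugate :: "cell set \<Rightarrow> cell set" where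
  "conjugate S = prod.swap ` S"

definition row_len :: "cell set \<Rightarrow> nat \<Rightarrow> nat" where
  "row_len S i = card {j. (i, j) \<in> S}"

lemma young_finite: "young S \<Longrightarrow> finite S"
  by (simp add: young_def)

lemma young_downward: "young S \<Longrightarrow> (i, j) \<in> S \<Longrightarrow> i' \<le> i \<Longrightarrow> j' \<le> j \<Longrightarrow> (i', j') \<in> S"
  unfolding young_def by blast

lemma young_Int: "young S \<Longrightarrow> young T \<Longrightarrow> young (S \<inter> T)"
  unfolding young_def by blast

lemma young_Un: "young S \<Longrightarrow> young T \<Longrightarrow> young (S \<union> T)"
  unfolding young_def by blast

lemma mem_conjugate [simp]: "(i, j) \<in> conjugate S \<longleftrightarrow> (j, i) \<in> S"
  unfolding conjugate_def by force

lemma conjugate_conjugate [simp]: "conjugate (conjugate S) = S"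
  unfolding conjugate_def by (simp add: image_image)

lemma inj_conjugate: "inj conjugate"
  by (metis conjugate_conjugate injI)

lemma conjugate_Diff [simp]: "conjugate (A - B) = conjugate A - conjugate B"
  unfolding conjugate_def by auto

lemma conjugate_insert [simp]: "conjugate (insert (i, j) A) = insert (j, i) (conjugate A)"
  unfolding conjugate_def by auto

lemma conjugate_empty [simp]: "conjugate {} = {}"
  unfolding conjugate_def by auto

lemma conjugate_subset_iff [simp]: "conjugate A \<subseteq> conjugate B \<longleftrightarrow> A \<subseteq> B"
  unfolding conjugate_def by auto

lemma card_conjugate [simp]: "card (conjugate A) = card A"
  unfolding conjugate_def by (simp add: card_image)

lemma young_conjugate [simp]: "young (conjugate S) \<longleftrightarrow> young S"
  unfolding young_def conjugate_def by (auto simp: finite_image_iff)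

lemma row_len_eqI: "(\<And>j. (i, j) \<in> S \<longleftrightarrow> j < m) \<Longrightarrow> row_len S i = m"
  unfolding row_len_def by simp

lemma young_mem_iff_row_len:
  assumes "young S"
  shows "(i, j) \<in> S \<longleftrightarrow> j < row_len S i"
proof -
  have "{j. (i, j) \<in> S} \<subseteq> snd ` S"
    by force
  then have fin: "finite {j. (i, j) \<in> S}"
    using finite_subset young_finite[OF assms] by blast
  show ?thesis
  proof
    assume "(i, j) \<in> S"
    then have "{..j} \<subseteq> {j. (i, j) \<in> S}"
      using young_downward[OF assms] by blast
    then have "card {..j} \<le> row_len S i"
      unfolding row_len_def using card_mono[OF fin] by blast
    then show "j < row_len S i"
      by simp
  next
    assume j: "j < row_len S i"
    show "(i, j) \<in> S"
    proof (rule ccontr)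
      assume "(i, j) \<notin> S"
      then have "{j. (i, j) \<in> S} \<subseteq> {..<j}"
        using young_downward[OF assms, of i _ i j] not_le by blast
      then have "row_len S i \<le> card {..<j}"
        unfolding row_len_def by (intro card_mono) auto
      then have "row_len S i \<le> j"
        by simp
      with j show False by simp
    qed
  qed
qed

lemma row_len_antimono:
  assumes "young S" and "i \<le> i'"
  shows "row_len S i' \<le> row_len S i"
proof (rule ccontr)
  assume "\<not> ?thesis"
  then have "(i', row_len S i) \<in> S"
    using young_mem_iff_row_len[OF assms(1)] by simp
  then have "(i, row_len S i) \<in> S"
    using young_downward[OF assms(1)] assms(2) by blast
  then show False
    using young_mem_iff_row_len[OF assms(1)] by blast
qed

lemma young_by_row_len:
  assumes "finite S" and "\<And>i j. (i, j) \<in> S \<longleftrightarrow> j < f i" and "antimono f"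
  shows "young S"
proof -
  have "(i', j') \<in> S" if "(i, j) \<in> S" "i' \<le> i" "j' \<le> j" for i j i' j'
  proof -
    have "j < f i"
      using that(1) assms(2) by blast
    moreover have "f i \<le> f i'"
      using assms(3) that(2) by (rule antimonoD)
    ultimately show ?thesis
      using that(3) assms(2) by simp
  qed
  then show ?thesis
    using assms(1) unfolding young_def by blast
qed

lemma row_len_pos_iff: "young S \<Longrightarrow> 0 < row_len S i \<longleftrightarrow> (i, 0) \<in> S"
  by (simp add: young_mem_iff_row_len)

lemma finite_row_len_pos: "young S \<Longrightarrow> finite {i. 0 < row_len S i}"
  by (rule finite_subset[of _ "fst ` S"]) (force simp: row_len_pos_iff young_finite)+

definition domino_step :: "cell set \<Rightarrow> cell set \<Rightarrow> bool" where
  "domino_step P S \<longleftrightarrow> young P \<and> young S \<and> P \<subseteq> S \<and> is_domino (S - P)"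

lemma domino_step_young: "domino_step P S \<Longrightarrow> young P \<and> young S"
  by (simp add: domino_step_def)

lemma horizontal_domino_conjugate: "horizontal_domino (conjugate D) \<longleftrightarrow> vertical_domino D"
  unfolding horizontal_domino_def vertical_domino_def
  by (metis conjugate_conjugate conjugate_empty conjugate_insert)

lemma vertical_domino_conjugate: "vertical_domino (conjugate D) \<longleftrightarrow> horizontal_domino D"
  by (metis horizontal_domino_conjugate conjugate_conjugate)

lemma horizontal_not_vertical: "horizontal_domino D \<Longrightarrow> \<not> vertical_domino D"
  unfolding horizontal_domino_def vertical_domino_def by (auto simp: doubleton_eq_iff)

lemma domino_step_conjugate [simp]:
  "domino_step (conjugate P) (conjugate S) \<longleftrightarrow> domino_step P S"
  unfolding domino_step_def is_domino_def
  by (metis conjugate_Diff conjugate_subset_iff young_conjugate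
      horizontal_domino_conjugate vertical_domino_conjugate)

lemma card_domino: "is_domino D \<Longrightarrow> card D = 2"
  unfolding is_domino_def vertical_domino_def horizontal_domino_def by auto

lemma domino_step_card:
  assumes "domino_step P S"
  shows "card S = card P + 2"
proof -
  have "finite S" "P \<subseteq> S" "card (S - P) = 2"
    using assms card_domino young_finite unfolding domino_step_def by auto
  then show ?thesis
    by (metis card_Diff_subset card_mono finite_subset le_add_diff_inverse)
qed

definition ups :: "cell set \<Rightarrow> cell set set" where
  "ups S = {S'. domino_step S S'}"

definition downs :: "cell set \<Rightarrow> cell set set" where
  "downs S = {P. domino_step P S}"

definition ups_hor :: "cell set \<Rightarrow> cell set set" where
  "ups_hor S = {S'. domino_step S S' \<and> horizontal_domino (S' - S)}"

definition downs_hor :: "cell set \<Rightarrow> cell set set" where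
  "downs_hor S = {P. domino_step P S \<and> horizontal_domino (S - P)}"

definition ups_vert :: "cell set \<Rightarrow> cell set set" where
  "ups_vert S = {S'. domino_step S S' \<and> vertical_domino (S' - S)}"

definition downs_vert :: "cell set \<Rightarrow> cell set set" where
  "downs_vert S = {P. domino_step P S \<and> vertical_domino (S - P)}"

lemma ups_split: "ups S = ups_hor S \<union> ups_vert S" "ups_hor S \<inter> ups_vert S = {}"
  unfolding ups_def ups_hor_def ups_vert_def domino_step_def is_domino_def
  using horizontal_not_vertical by blast+

lemma downs_split: "downs S = downs_hor S \<union> downs_vert S" "downs_hor S \<inter> downs_vert S = {}"
  unfolding downs_def downs_hor_def downs_vert_def domino_step_def is_domino_def
  using horizontal_not_vertical by blast+

lemma mem_conjugate_image_iff: "S \<in> conjugate ` X \<longleftrightarrow> conjugate S \<in> X"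
  by (metis conjugate_conjugate image_iff)

lemma ups_vert_conjugate: "ups_vert S = conjugate ` ups_hor (conjugate S)"
  unfolding ups_vert_def ups_hor_def mem_conjugate_image_iff set_eq_iff
  by (simp add: horizontal_domino_conjugate flip: conjugate_Diff)

lemma downs_vert_conjugate: "downs_vert S = conjugate ` downs_hor (conjugate S)"
  unfolding downs_vert_def downs_hor_def mem_conjugate_image_iff set_eq_iff
  by (simp add: horizontal_domino_conjugate flip: conjugate_Diff)

definition hor_addable :: "cell set \<Rightarrow> nat set" where
  "hor_addable S = {k. k = 0 \<or> row_len S k + 2 \<le> row_len S (k - 1)}"

definition hor_removable :: "cell set \<Rightarrow> nat set" where
  "hor_removable S = {i. row_len S (Suc i) + 2 \<le> row_len S i}"

definition add_hor :: "cell set \<Rightarrow> nat \<Rightarrow> cell set" where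
  "add_hor S k = S \<union> {(k, row_len S k), (k, Suc (row_len S k))}"

definition remove_hor :: "cell set \<Rightarrow> nat \<Rightarrow> cell set" where
  "remove_hor S i = S - {(i, row_len S i - 2), (i, row_len S i - 1)}"

lemma hor_addable_eq: "hor_addable S = insert 0 (Suc ` hor_removable S)"
proof -
  have "k \<in> hor_addable S \<longleftrightarrow> k \<in> insert 0 (Suc ` hor_removable S)" for k
    by (cases k) (auto simp: hor_addable_def hor_removable_def)
  then show ?thesis
    by blast
qed

lemma finite_hor_removable: "young S \<Longrightarrow> finite (hor_removable S)"
  by (rule finite_subset[OF _ finite_row_len_pos]) (auto simp: hor_removable_def)

lemma mem_add_hor:
  "young S \<Longrightarrow> (i, j) \<in> add_hor S k \<longleftrightarrow> j < row_len S i + (if i = k then 2 else 0)"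
  by (auto simp: add_hor_def young_mem_iff_row_len)

lemma row_len_add_hor:
  "young S \<Longrightarrow> row_len (add_hor S k) i = row_len S i + (if i = k then 2 else 0)"
  by (rule row_len_eqI) (simp add: mem_add_hor)

lemma young_add_hor:
  assumes y: "young S" and k: "k \<in> hor_addable S"
  shows "young (add_hor S k)"
proof (rule young_by_row_len)
  show "finite (add_hor S k)"
    using young_finite[OF y] by (simp add: add_hor_def)
  show "(i, j) \<in> add_hor S k \<longleftrightarrow> j < row_len S i + (if i = k then 2 else 0)" for i j
    by (rule mem_add_hor[OF y])
  show "antimono (\<lambda>i. row_len S i + (if i = k then 2 else 0))"
  proof (rule antimonoI)
    fix i i' :: nat
    assume i: "i \<le> i'"
    have "row_len S i' \<le> row_len S i"
      using row_len_antimono[OF y i] .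
    moreover have "row_len S k + 2 \<le> row_len S i" if "i < k"
    proof -
      have "row_len S k + 2 \<le> row_len S (k - 1)"
        using k that by (simp add: hor_addable_def)
      also have "\<dots> \<le> row_len S i"
        using that by (intro row_len_antimono[OF y]) simp
      finally show ?thesis .
    qed
    ultimately show "row_len S i' + (if i' = k then 2 else 0) \<le> row_len S i + (if i = k then 2 else 0)"
      using i by auto
  qed
qed

lemma add_hor_Diff: "young S \<Longrightarrow> add_hor S k - S = {(k, row_len S k), (k, Suc (row_len S k))}"
  by (auto simp: add_hor_def young_mem_iff_row_len)

lemma add_hor_in_ups_hor:
  assumes "young S" and "k \<in> hor_addable S"
  shows "add_hor S k \<in> ups_hor S"
proof -
  have "horizontal_domino (add_hor S k - S)"
    unfolding add_hor_Diff[OF assms(1)] horizontal_domino_def by blast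
  then show ?thesis
    using assms young_add_hor unfolding ups_hor_def domino_step_def is_domino_def
    by (auto simp: add_hor_def)
qed

lemma ups_hor_obtain_add_hor:
  assumes "S' \<in> ups_hor S"
  obtains k where "k \<in> hor_addable S" and "S' = add_hor S k"
proof -
  have y: "young S" and y': "young S'" and sub: "S \<subseteq> S'"
    using assms unfolding ups_hor_def domino_step_def by auto
  obtain k j where D: "S' - S = {(k, j), (k, Suc j)}"
    using assms unfolding ups_hor_def horizontal_domino_def by auto
  have "(k, j') \<in> S" if "j' < j" for j'
  proof -
    have "(k, j') \<in> S'"
      using D that young_downward[OF y', of k j k j'] by auto
    then show ?thesis
      using D that by auto
  qed
  then have "j \<le> row_len S k"
    using young_mem_iff_row_len[OF y] not_le by blast
  moreover have "(k, j) \<notin> S"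
    using D by blast
  then have "row_len S k \<le> j"
    using young_mem_iff_row_len[OF y] not_le by blast
  ultimately have j: "j = row_len S k"
    by simp
  have "k \<in> hor_addable S"
  proof (cases "k = 0")
    case False
    have "(k, Suc j) \<in> S'"
      using D by blast
    then have "(k - 1, Suc j) \<in> S'"
      using young_downward[OF y'] by (meson diff_le_self order_refl)
    moreover have "(k - 1, Suc j) \<notin> S' - S"
      unfolding D using False by auto
    ultimately have "(k - 1, Suc j) \<in> S"
      by blast
    then show ?thesis
      using j young_mem_iff_row_len[OF y] by (auto simp: hor_addable_def)
  qed (simp add: hor_addable_def)
  moreover have "S' = add_hor S k"
    unfolding add_hor_def using D sub j by blast
  ultimately show ?thesis
    using that by blast
qed

lemma inj_add_hor:
  assumes "young S"
  shows "inj (add_hor S)"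
proof (rule injI)
  fix k k'
  assume "add_hor S k = add_hor S k'"
  moreover have "(k, row_len S k) \<in> add_hor S k"
    by (simp add: add_hor_def)
  ultimately show "k = k'"
    using mem_add_hor[OF assms, of k "row_len S k" k'] by (auto split: if_splits)
qed

lemma ups_hor_eq: "young S \<Longrightarrow> ups_hor S = add_hor S ` hor_addable S"
  using add_hor_in_ups_hor ups_hor_obtain_add_hor by blast

lemma mem_remove_hor:
  assumes "young S" and "i \<in> hor_removable S"
  shows "(a, b) \<in> remove_hor S i \<longleftrightarrow> b < row_len S a - (if a = i then 2 else 0)"
proof -
  have "2 \<le> row_len S i"
    using assms(2) by (simp add: hor_removable_def)
  then show ?thesis
    by (auto simp: remove_hor_def young_mem_iff_row_len[OF assms(1)])
qed

lemma row_len_remove_hor: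
  "young S \<Longrightarrow> i \<in> hor_removable S \<Longrightarrow> row_len (remove_hor S i) a = row_len S a - (if a = i then 2 else 0)"
  by (rule row_len_eqI) (simp add: mem_remove_hor)

lemma remove_hor_correct:
  assumes y: "young S" and i: "i \<in> hor_removable S"
  shows "young (remove_hor S i)" and "i \<in> hor_addable (remove_hor S i)"
    and "add_hor (remove_hor S i) i = S"
proof -
  have i2: "row_len S (Suc i) + 2 \<le> row_len S i"
    using i by (simp add: hor_removable_def)
  show yR: "young (remove_hor S i)"
  proof (rule young_by_row_len[OF _ mem_remove_hor[OF y i]])
    show "finite (remove_hor S i)"
      using young_finite[OF y] by (simp add: remove_hor_def)
    show "antimono (\<lambda>a. row_len S a - (if a = i then 2 else 0))"
    proof (rule antimonoI)
      fix a a' :: nat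
      assume a: "a \<le> a'"
      have "row_len S a' \<le> row_len S a"
        using row_len_antimono[OF y a] .
      moreover have "row_len S a' \<le> row_len S i - 2" if "a = i" "a' \<noteq> i"
        using i2 row_len_antimono[OF y, of "Suc i" a'] that a by simp
      ultimately show "row_len S a' - (if a' = i then 2 else 0) \<le> row_len S a - (if a = i then 2 else 0)"
        by auto
    qed
  qed
  show "i \<in> hor_addable (remove_hor S i)"
    using i2 row_len_antimono[OF y, of "i - 1" i] by (auto simp: hor_addable_def row_len_remove_hor[OF y i])
  show "add_hor (remove_hor S i) i = S"
    using i2 by (auto simp: mem_add_hor[OF yR] mem_remove_hor[OF y i] row_len_remove_hor[OF y i]
        young_mem_iff_row_len[OF y])
qed

lemma remove_hor_add_hor:
  assumes "young P"
  shows "remove_hor (add_hor P k) k = P"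
proof -
  have "remove_hor (add_hor P k) k = add_hor P k - {(k, row_len P k), (k, Suc (row_len P k))}"
    by (simp add: remove_hor_def row_len_add_hor[OF assms])
  also have "\<dots> = P"
    by (auto simp: add_hor_def young_mem_iff_row_len[OF assms])
  finally show ?thesis .
qed

lemma hor_removable_add_hor: "young P \<Longrightarrow> k \<in> hor_removable (add_hor P k)"
  using row_len_antimono[of P k "Suc k"] by (simp add: hor_removable_def row_len_add_hor)

lemma downs_hor_eq: "young S \<Longrightarrow> downs_hor S = remove_hor S ` hor_removable S"
proof (intro set_eqI iffI)
  fix P
  assume y: "young S" and "P \<in> downs_hor S"
  then have up: "S \<in> ups_hor P" and yP: "young P"
    unfolding downs_hor_def ups_hor_def domino_step_def by auto
  obtain k where "S = add_hor P k"
    using up by (rule ups_hor_obtain_add_hor)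
  then show "P \<in> remove_hor S ` hor_removable S"
    using remove_hor_add_hor[OF yP] hor_removable_add_hor[OF yP] by blast
next
  fix P
  assume y: "young S" and "P \<in> remove_hor S ` hor_removable S"
  then obtain i where i: "i \<in> hor_removable S" and P: "P = remove_hor S i"
    by blast
  have "S \<in> ups_hor P"
    using remove_hor_correct[OF y i] add_hor_in_ups_hor unfolding P by metis
  then show "P \<in> downs_hor S"
    unfolding downs_hor_def ups_hor_def by simp
qed

lemma inj_on_remove_hor: "young S \<Longrightarrow> inj_on (remove_hor S) (hor_removable S)"
  by (rule inj_onI) (metis remove_hor_correct inj_add_hor injD)

lemma finite_ups_hor: "young S \<Longrightarrow> finite (ups_hor S)"
  by (simp add: ups_hor_eq hor_addable_eq finite_hor_removable)

lemma finite_downs_hor: "young S \<Longrightarrow> finite (downs_hor S)"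
  by (simp add: downs_hor_eq finite_hor_removable)

lemma finite_ups: "young S \<Longrightarrow> finite (ups S)"
  by (simp add: ups_split ups_vert_conjugate finite_ups_hor)

lemma finite_downs: "finite (downs S)"
proof (cases "young S")
  case True
  then show ?thesis
    by (simp add: downs_split downs_vert_conjugate finite_downs_hor)
qed (simp add: downs_def domino_step_def)

lemma card_ups_hor:
  assumes "young S"
  shows "card (ups_hor S) = Suc (card (downs_hor S))"
proof -
  have "card (ups_hor S) = card (hor_addable S)"
    using inj_add_hor[OF assms] by (simp add: ups_hor_eq[OF assms] card_image inj_on_subset)
  also have "\<dots> = Suc (card (hor_removable S))"
    using finite_hor_removable[OF assms] by (simp add: hor_addable_eq card_image image_iff)
  also have "card (hor_removable S) = card (downs_hor S)"
    using inj_on_remove_hor[OF assms] by (simp add: downs_hor_eq[OF assms] card_image)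
  finally show ?thesis .
qed

lemma card_ups_vert: "young S \<Longrightarrow> card (ups_vert S) = Suc (card (downs_vert S))"
  using card_ups_hor[of "conjugate S"] inj_on_subset[OF inj_conjugate]
  by (simp add: ups_vert_conjugate downs_vert_conjugate card_image)

section \<open>Weights of diagrams\<close>

definition odd_rows :: "cell set \<Rightarrow> nat" where
  "odd_rows S = card {i. odd (row_len S i)}"

definition odd_cols :: "cell set \<Rightarrow> nat" where
  "odd_cols S = odd_rows (conjugate S)"

definition odd_odd_cells :: "cell set \<Rightarrow> nat" where
  "odd_odd_cells S = card (S \<inter> {p. odd (fst p) \<and> odd (snd p)})"

definition weight :: "'a::comm_ring_1 \<Rightarrow> 'a \<Rightarrow> 'a \<Rightarrow> cell set \<Rightarrow> 'a" where
  "weight x y c S = x ^ odd_rows S * y ^ odd_cols S * c ^ odd_odd_cells S"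

lemma odd_odd_cells_conjugate [simp]: "odd_odd_cells (conjugate S) = odd_odd_cells S"
proof -
  have "conjugate S \<inter> {p. odd (fst p) \<and> odd (snd p)} = conjugate (S \<inter> {p. odd (fst p) \<and> odd (snd p)})"
    unfolding conjugate_def by auto
  then show ?thesis
    unfolding odd_odd_cells_def by simp
qed

lemma odd_rows_conjugate [simp]: "odd_rows (conjugate S) = odd_cols S"
  by (simp add: odd_cols_def)

lemma odd_cols_conjugate [simp]: "odd_cols (conjugate S) = odd_rows S"
  by (simp add: odd_cols_def)

lemma weight_conjugate: "weight x y c (conjugate S) = weight y x c S"
  unfolding weight_def by (simp add: mult_ac)

lemma finite_odd_rows: "young S \<Longrightarrow> finite {i. odd (row_len S i)}"
  by (rule finite_subset[OF _ finite_row_len_pos]) (auto intro: odd_pos)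

lemma card_odd_incr_two:
  fixes g g' :: "nat \<Rightarrow> nat"
  assumes fin: "finite {j. odd (g j)}" and g': "\<And>j. g' j = g j + (if j = p \<or> j = q then 1 else 0)"
    and pq: "p \<noteq> q" and gq: "g q = g p"
  shows "card {j. odd (g' j)} + (if odd (g p) then 2 else 0) = card {j. odd (g j)} + (if even (g p) then 2 else 0)"
proof (cases "odd (g p)")
  case True
  have eq: "{j. odd (g j)} = insert p (insert q {j. odd (g' j)})"
    using g' gq True pq by auto
  moreover have "p \<notin> {j. odd (g' j)}" "q \<notin> {j. odd (g' j)}"
    using g' gq True by auto
  moreover have "finite {j. odd (g' j)}"
    using fin eq by (metis finite_insert)
  ultimately show ?thesis
    using True pq by simp
next
  case False
  have "{j. odd (g' j)} = insert p (insert q {j. odd (g j)})"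
    using g' gq False pq by auto
  moreover have "p \<notin> {j. odd (g j)}" "q \<notin> {j. odd (g j)}"
    using gq False by auto
  ultimately show ?thesis
    using False pq fin by simp
qed

lemma col_len_add_hor:
  assumes y: "young S" and k: "k \<in> hor_addable S"
  shows "row_len (conjugate S) (row_len S k) = k" and "row_len (conjugate S) (Suc (row_len S k)) = k"
    and "row_len (conjugate (add_hor S k)) j
           = row_len (conjugate S) j + (if j = row_len S k \<or> j = Suc (row_len S k) then 1 else 0)"
proof -
  let ?r = "row_len S k"
  have below: "(i, j) \<in> S \<longleftrightarrow> i < k" if "j = ?r \<or> j = Suc ?r" for i j
  proof
    assume "(i, j) \<in> S"
    then have "j < row_len S i"
      using young_mem_iff_row_len[OF y] by blast
    then show "i < k"
      using that row_len_antimono[OF y, of k i] by (cases "k \<le> i") auto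
  next
    assume "i < k"
    then have "?r + 2 \<le> row_len S (k - 1)"
      using k by (simp add: hor_addable_def)
    moreover have "row_len S (k - 1) \<le> row_len S i"
      using \<open>i < k\<close> by (intro row_len_antimono[OF y]) simp
    ultimately show "(i, j) \<in> S"
      using young_mem_iff_row_len[OF y] that by auto
  qed
  show "row_len (conjugate S) ?r = k" "row_len (conjugate S) (Suc ?r) = k"
    by (rule row_len_eqI; simp add: below)+
  show "row_len (conjugate (add_hor S k)) j
          = row_len (conjugate S) j + (if j = ?r \<or> j = Suc ?r then 1 else 0)"
  proof (cases "j = ?r \<or> j = Suc ?r")
    case True
    have "row_len (conjugate S) j = k"
      using True below by (intro row_len_eqI) simp
    moreover have "(i, j) \<in> add_hor S k \<longleftrightarrow> i < Suc k" for i
      using True below[OF True, of i] unfolding add_hor_def by auto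
    ultimately show ?thesis
      using True by (intro row_len_eqI) simp
  next
    case False
    then have "(i, j) \<in> add_hor S k \<longleftrightarrow> (i, j) \<in> S" for i
      unfolding add_hor_def by auto
    then show ?thesis
      using False young_mem_iff_row_len[of "conjugate S" j] y by (intro row_len_eqI) simp
  qed
qed

lemma odd_rows_add_hor:
  assumes "young S"
  shows "odd_rows (add_hor S k) = odd_rows S"
proof -
  have "{i. odd (row_len (add_hor S k) i)} = {i. odd (row_len S i)}"
    by (auto simp: row_len_add_hor[OF assms])
  then show ?thesis
    by (simp add: odd_rows_def)
qed

lemma odd_cols_add_hor:
  assumes "young S" and "k \<in> hor_addable S"
  shows "odd_cols (add_hor S k) + (if odd k then 2 else 0) = odd_cols S + (if even k then 2 else 0)"
  using card_odd_incr_two[OF finite_odd_rows col_len_add_hor(3)[OF assms]] col_len_add_hor(1,2)[OF assms]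
    assms(1) unfolding odd_cols_def odd_rows_def by simp

lemma odd_odd_cells_add_hor:
  assumes y: "young S"
  shows "odd_odd_cells (add_hor S k) = odd_odd_cells S + (if odd k then 1 else 0)"
proof -
  let ?O = "{p. odd (fst p) \<and> odd (snd p)}"
  let ?D = "{(k, row_len S k), (k, Suc (row_len S k))}"
  have "card (?D \<inter> ?O) = (if odd k then 1 else 0)"
  proof (cases "odd k")
    case True
    then have "?D \<inter> ?O = {(k, if odd (row_len S k) then row_len S k else Suc (row_len S k))}"
      by auto
    then show ?thesis
      using True by simp
  qed auto
  moreover have "add_hor S k \<inter> ?O = (S \<inter> ?O) \<union> (?D \<inter> ?O)"
    unfolding add_hor_def by auto
  moreover have "card ((S \<inter> ?O) \<union> (?D \<inter> ?O)) = card (S \<inter> ?O) + card (?D \<inter> ?O)"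
    using young_finite[OF y] young_mem_iff_row_len[OF y] by (intro card_Un_disjoint) auto
  ultimately show ?thesis
    unfolding odd_odd_cells_def by simp
qed

lemma ups_hor_parity:
  assumes "S \<in> ups_hor P"
  shows "odd_rows S = odd_rows P" and "even (odd_cols P + odd_cols S)"
proof -
  have y: "young P"
    using assms by (simp add: ups_hor_def domino_step_def)
  obtain k where k: "k \<in> hor_addable P" "S = add_hor P k"
    using assms by (rule ups_hor_obtain_add_hor)
  show "odd_rows S = odd_rows P"
    using odd_rows_add_hor[OF y] k by simp
  show "even (odd_cols P + odd_cols S)"
    using odd_cols_add_hor[OF y k(1)] k(2) by (cases "odd k") presburger+
qed

lemma domino_step_parity:
  assumes "domino_step P S"
  shows "even (odd_rows P + odd_rows S) \<and> even (odd_cols P + odd_cols S)"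
proof (cases "horizontal_domino (S - P)")
  case True
  then have "S \<in> ups_hor P"
    using assms by (simp add: ups_hor_def)
  then show ?thesis
    using ups_hor_parity by simp
next
  case False
  then have "S \<in> ups_vert P"
    using assms by (simp add: ups_vert_def domino_step_def is_domino_def)
  then have "conjugate S \<in> ups_hor (conjugate P)"
    by (auto simp: ups_vert_conjugate)
  then show ?thesis
    using ups_hor_parity by fastforce
qed

lemma weight_add_hor_0: "young S \<Longrightarrow> weight x y c (add_hor S 0) = y\<^sup>2 * weight x y c S"
  using odd_cols_add_hor[of S 0] odd_rows_add_hor[of S 0] odd_odd_cells_add_hor[of S 0]
  by (simp add: weight_def hor_addable_def power_add power2_eq_square mult_ac)

text \<open>Adding a horizontal domino in row \<open>i + 1\<close> and removing one from row \<open>i\<close> have the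
  same effect on the odd rows and the odd columns, while the former adds exactly one more cell
  with both coordinates odd.\<close>
lemma weight_add_hor_Suc:
  assumes y: "young S" and i: "i \<in> hor_removable S"
  shows "weight x y c (add_hor S (Suc i)) = c * weight x y c (remove_hor S i)"
proof -
  let ?P = "remove_hor S i"
  have yP: "young ?P" and iP: "i \<in> hor_addable ?P" and S: "add_hor ?P i = S"
    using remove_hor_correct[OF y i] by auto
  have si: "Suc i \<in> hor_addable S"
    using i by (simp add: hor_addable_def hor_removable_def)
  have "odd_rows (add_hor S (Suc i)) = odd_rows ?P"
    using odd_rows_add_hor[OF y] odd_rows_add_hor[OF yP, of i] S by simp
  moreover have "odd_cols (add_hor S (Suc i)) = odd_cols ?P"
    using odd_cols_add_hor[OF yP iP] odd_cols_add_hor[OF y si] S by (cases "odd i") auto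
  moreover have "odd_odd_cells (add_hor S (Suc i)) = Suc (odd_odd_cells ?P)"
    using odd_odd_cells_add_hor[OF yP, of i] odd_odd_cells_add_hor[OF y, of "Suc i"] S by auto
  ultimately show ?thesis
    unfolding weight_def by (simp add: mult_ac)
qed

lemma sum_ups_hor_weight:
  assumes y: "young S"
  shows "(\<Sum>S'\<in>ups_hor S. weight x y c S') = y\<^sup>2 * weight x y c S + c * (\<Sum>P\<in>downs_hor S. weight x y c P)"
proof -
  have "(\<Sum>S'\<in>ups_hor S. weight x y c S') = (\<Sum>k\<in>hor_addable S. weight x y c (add_hor S k))"
    using inj_add_hor[OF y] by (simp add: ups_hor_eq[OF y] sum.reindex inj_on_subset)
  also have "\<dots> = weight x y c (add_hor S 0) + (\<Sum>i\<in>hor_removable S. weight x y c (add_hor S (Suc i)))"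
    unfolding hor_addable_eq using finite_hor_removable[OF y] by (simp add: image_iff sum.reindex)
  also have "\<dots> = y\<^sup>2 * weight x y c S + c * (\<Sum>i\<in>hor_removable S. weight x y c (remove_hor S i))"
    by (simp add: weight_add_hor_0[OF y] weight_add_hor_Suc[OF y] sum_distrib_left)
  also have "(\<Sum>i\<in>hor_removable S. weight x y c (remove_hor S i)) = (\<Sum>P\<in>downs_hor S. weight x y c P)"
    using inj_on_remove_hor[OF y] by (simp add: downs_hor_eq[OF y] sum.reindex)
  finally show ?thesis .
qed

lemma sum_ups_vert_weight:
  assumes y: "young S"
  shows "(\<Sum>S'\<in>ups_vert S. weight x y c S') = x\<^sup>2 * weight x y c S + c * (\<Sum>P\<in>downs_vert S. weight x y c P)"
  using sum_ups_hor_weight[of "conjugate S" y x c] y inj_on_subset[OF inj_conjugate]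
  by (simp add: ups_vert_conjugate downs_vert_conjugate sum.reindex weight_conjugate)

section \<open>Up and down operators\<close>

definition spin :: "'a::comm_ring_1 \<Rightarrow> cell set \<Rightarrow> cell set \<Rightarrow> 'a" where
  "spin s P S = (if vertical_domino (S - P) then s else 1)"

definition lower :: "'a::comm_ring_1 \<Rightarrow> (cell set \<Rightarrow> 'a) \<Rightarrow> cell set \<Rightarrow> 'a" where
  "lower s F S = (\<Sum>P\<in>downs S. spin s P S * F P)"

definition raise :: "'a::comm_ring_1 \<Rightarrow> (cell set \<Rightarrow> 'a) \<Rightarrow> cell set \<Rightarrow> 'a" where
  "raise s F T = (\<Sum>S\<in>ups T. spin s T S * F S)"

lemma sum_ups_spin:
  assumes "young S"
  shows "(\<Sum>S'\<in>ups S. spin s S S' * F S') = (\<Sum>S'\<in>ups_hor S. F S') + s * (\<Sum>S'\<in>ups_vert S. F S')"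
proof -
  have "spin s S S' = 1" if "S' \<in> ups_hor S" for S'
    using that horizontal_not_vertical by (auto simp: spin_def ups_hor_def)
  moreover have "spin s S S' = s" if "S' \<in> ups_vert S" for S'
    using that by (simp add: spin_def ups_vert_def)
  ultimately show ?thesis
    using ups_split finite_ups_hor[OF assms] finite_ups[OF assms]
    by (simp add: sum.union_disjoint sum_distrib_left)
qed

lemma sum_downs_spin:
  assumes "young S"
  shows "(\<Sum>P\<in>downs S. spin s P S * F P) = (\<Sum>P\<in>downs_hor S. F P) + s * (\<Sum>P\<in>downs_vert S. F P)"
proof -
  have "spin s P S = 1" if "P \<in> downs_hor S" for P
    using that horizontal_not_vertical by (auto simp: spin_def downs_hor_def)
  moreover have "spin s P S = s" if "P \<in> downs_vert S" for P
    using that by (simp add: spin_def downs_vert_def)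
  ultimately show ?thesis
    using downs_split finite_downs_hor[OF assms] finite_downs[of S]
    by (simp add: sum.union_disjoint sum_distrib_left)
qed

lemma raise_weight:
  assumes "young S"
  shows "raise s (weight x y c) S = (y\<^sup>2 + x\<^sup>2 * s) * weight x y c S + c * lower s (weight x y c) S"
  unfolding raise_def lower_def sum_ups_spin[OF assms] sum_downs_spin[OF assms]
  by (simp add: sum_ups_hor_weight[OF assms] sum_ups_vert_weight[OF assms] algebra_simps)

lemma sum_ups_spin_square:
  assumes "young S"
  shows "(\<Sum>S'\<in>ups S. spin s S S' * spin s S S') = 1 + s\<^sup>2 + (\<Sum>P\<in>downs S. spin s P S * spin s P S)"
proof -
  have "(\<Sum>S'\<in>ups S. spin s S S' * spin s S S') = (\<Sum>S'\<in>ups_hor S. 1) + s * (\<Sum>S'\<in>ups_vert S. s)"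
    unfolding sum_ups_spin[OF assms]
    by (auto simp: spin_def ups_hor_def ups_vert_def horizontal_not_vertical intro!: sum.cong)
  moreover have "(\<Sum>P\<in>downs S. spin s P S * spin s P S) = (\<Sum>P\<in>downs_hor S. 1) + s * (\<Sum>P\<in>downs_vert S. s)"
    unfolding sum_downs_spin[OF assms]
    by (auto simp: spin_def downs_hor_def downs_vert_def horizontal_not_vertical intro!: sum.cong)
  ultimately show ?thesis
    by (simp add: card_ups_hor[OF assms] card_ups_vert[OF assms] algebra_simps power2_eq_square)
qed

lemma is_domino_pair_iff:
  "is_domino {(a, b), (c, d)} \<longleftrightarrow> (a = c \<and> (d = Suc b \<or> b = Suc d)) \<or> (b = d \<and> (c = Suc a \<or> a = Suc c))"
  unfolding is_domino_def vertical_domino_def horizontal_domino_def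
  by (auto simp: doubleton_eq_iff)

lemma vertical_domino_pair_iff:
  "is_domino {(a, b), (c, d)} \<Longrightarrow> vertical_domino {(a, b), (c, d)} \<longleftrightarrow> b = d"
  unfolding is_domino_pair_iff vertical_domino_def by (auto simp: doubleton_eq_iff)

lemma domino_obtain_other:
  assumes "is_domino D" and "p \<in> D"
  obtains q where "D = {p, q}"
  using assms unfolding is_domino_def vertical_domino_def horizontal_domino_def by auto

lemma common_neighbour_diagonal:
  assumes "is_domino {x, z}" and "is_domino {y, z}" and "x \<noteq> y"
    and "\<not> (fst x \<le> fst y \<and> snd x \<le> snd y)" and "\<not> (fst y \<le> fst x \<and> snd y \<le> snd x)"
  shows "(\<exists>i j. x = (i, Suc j) \<and> y = (Suc i, j)) \<or> (\<exists>i j. y = (i, Suc j) \<and> x = (Suc i, j))"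
  using assms by (cases x; cases y; cases z) (auto simp: is_domino_pair_iff)

definition up_overlap :: "'a::comm_ring_1 \<Rightarrow> cell set \<Rightarrow> cell set \<Rightarrow> 'a" where
  "up_overlap s T Q = (\<Sum>L\<in>ups T \<inter> ups Q. spin s T L * spin s Q L)"

definition down_overlap :: "'a::comm_ring_1 \<Rightarrow> cell set \<Rightarrow> cell set \<Rightarrow> 'a" where
  "down_overlap s T Q = (\<Sum>N\<in>downs T \<inter> downs Q. spin s N T * spin s N Q)"

lemma up_overlap_commute: "up_overlap s T Q = up_overlap s Q T"
  unfolding up_overlap_def by (simp add: Int_commute mult.commute)

lemma down_overlap_commute: "down_overlap s T Q = down_overlap s Q T"
  unfolding down_overlap_def by (simp add: Int_commute mult.commute)

lemma common_up_cell_apart: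
  assumes x: "T - Q = {x}" and y: "Q - T = {y}" and L: "L \<in> ups T" "L \<in> ups Q"
  obtains z where "z \<notin> T" and "L = insert z (T \<union> Q)" and "is_domino {y, z}" and "is_domino {x, z}"
proof -
  have TL: "T \<subseteq> L" "is_domino (L - T)" and QL: "Q \<subseteq> L" "is_domino (L - Q)"
    using L unfolding ups_def domino_step_def by auto
  obtain z where z: "L - T = {y, z}"
    using domino_obtain_other[OF TL(2), of y] y QL by blast
  obtain z' where z': "L - Q = {x, z'}"
    using domino_obtain_other[OF QL(2), of x] x TL by blast
  have "z \<noteq> y"
    using TL(2) z card_domino by fastforce
  then have "z \<notin> Q"
    using y z by blast
  then have "z' = z"
    using x z z' by blast
  show ?thesis
  proof (rule that)
    show "z \<notin> T" "L = insert z (T \<union> Q)"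
      using TL(1) z y by blast+
    show "is_domino {y, z}" "is_domino {x, z}"
      using TL(2) QL(2) z z' \<open>z' = z\<close> by simp_all
  qed
qed

lemma common_down_cell_apart:
  assumes x: "T - Q = {x}" and y: "Q - T = {y}" and N: "N \<in> downs T" "N \<in> downs Q"
  obtains w where "w \<in> T \<inter> Q" and "N = T - {x, w}" and "is_domino {x, w}" and "is_domino {y, w}"
proof -
  have TN: "N \<subseteq> T" "is_domino (T - N)" and QN: "N \<subseteq> Q" "is_domino (Q - N)"
    using N unfolding downs_def domino_step_def by auto
  obtain w where w: "T - N = {x, w}"
    using domino_obtain_other[OF TN(2), of x] x QN by blast
  obtain w' where w': "Q - N = {y, w'}"
    using domino_obtain_other[OF QN(2), of y] y TN by blast
  have "w \<noteq> x"
    using TN(2) w card_domino by fastforce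
  then have "w \<in> Q"
    using x w by blast
  then have "w' = w"
    using y w w' by blast
  show ?thesis
  proof (rule that)
    show "w \<in> T \<inter> Q" "N = T - {x, w}"
      using TN(1) w \<open>w \<in> Q\<close> by blast+
    show "is_domino {x, w}" "is_domino {y, w}"
      using TN(2) QN(2) w w' \<open>w' = w\<close> by simp_all
  qed
qed

lemma young_diagonal_join:
  assumes yT: "young T" and yQ: "young Q" and xT: "(i, Suc j) \<in> T" and yQ': "(Suc i, j) \<in> Q"
  shows "young (insert (Suc i, Suc j) (T \<union> Q))"
  unfolding young_def
proof (intro conjI allI impI)
  show "finite (insert (Suc i, Suc j) (T \<union> Q))"
    using yT yQ by (simp add: young_finite)
  fix a b a' b'
  assume ab: "(a, b) \<in> insert (Suc i, Suc j) (T \<union> Q)" and le: "a' \<le> a" "b' \<le> b"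
  show "(a', b') \<in> insert (Suc i, Suc j) (T \<union> Q)"
  proof (cases "(a, b) = (Suc i, Suc j)")
    case True
    then consider "(a', b') = (Suc i, Suc j)" | "a' \<le> i" | "b' \<le> j"
      using le by fastforce
    then show ?thesis
      using young_downward[OF yT xT, of a' b'] young_downward[OF yQ yQ', of a' b'] le True
      by cases auto
  next
    case False
    then show ?thesis
      using ab young_downward[OF yT _ le] young_downward[OF yQ _ le] by blast
  qed
qed

lemma young_diagonal_meet:
  assumes yT: "young T" and yQ: "young Q" and xQ: "(i, Suc j) \<notin> Q" and yT': "(Suc i, j) \<notin> T"
  shows "young (T \<inter> Q - {(i, j)})"
  unfolding young_def
proof (intro conjI allI impI)
  show "finite (T \<inter> Q - {(i, j)})"
    using yT by (simp add: young_finite)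
  fix a b a' b'
  assume ab: "(a, b) \<in> T \<inter> Q - {(i, j)}" and le: "a' \<le> a" "b' \<le> b"
  have "(a', b') \<in> T \<inter> Q"
    using ab young_downward[OF young_Int[OF yT yQ] _ le] by blast
  moreover have "(a', b') \<noteq> (i, j)"
  proof
    assume "(a', b') = (i, j)"
    then consider "Suc i \<le> a" "j \<le> b" | "i \<le> a" "Suc j \<le> b"
      using ab le by fastforce
    then show False
      using ab young_downward[OF yT, of a b "Suc i" j] young_downward[OF yQ, of a b i "Suc j"] xQ yT'
      by cases blast+
  qed
  ultimately show "(a', b') \<in> T \<inter> Q - {(i, j)}"
    by blast
qed

lemma up_overlap_diagonal:
  assumes yT: "young T" and yQ: "young Q" and x: "T - Q = {(i, Suc j)}" and y: "Q - T = {(Suc i, j)}"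
  shows "up_overlap s T Q = s"
proof -
  let ?z = "(Suc i, Suc j)"
  let ?L = "insert ?z (T \<union> Q)"
  have xT: "(i, Suc j) \<in> T" and yQ': "(Suc i, j) \<in> Q"
    using x y by blast+
  have "(Suc i, j) \<notin> T" "(i, Suc j) \<notin> Q"
    using x y by blast+
  then have zT: "?z \<notin> T" and zQ: "?z \<notin> Q"
    using young_downward[OF yT, of "Suc i" "Suc j" "Suc i" j]
      young_downward[OF yQ, of "Suc i" "Suc j" i "Suc j"] by auto
  have LT: "?L - T = {(Suc i, j), ?z}" and LQ: "?L - Q = {(i, Suc j), ?z}"
    using x y zT zQ by blast+
  have "ups T \<inter> ups Q = {?L}"
  proof (intro equalityI subsetI)
    fix L
    assume "L \<in> ups T \<inter> ups Q"
    then obtain z where "z \<notin> T" "L = insert z (T \<union> Q)" "is_domino {(i, Suc j), z}"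
      "is_domino {(Suc i, j), z}"
      using common_up_cell_apart[OF x y] by blast
    moreover from this have "z = ?z"
      using young_downward[OF yT xT, of i j] by (cases z) (auto simp: is_domino_pair_iff)
    ultimately show "L \<in> {?L}"
      by simp
  next
    fix L
    assume "L \<in> {?L}"
    then show "L \<in> ups T \<inter> ups Q"
      using yT yQ young_diagonal_join[OF yT yQ xT yQ'] LT LQ
      by (auto simp: ups_def domino_step_def is_domino_pair_iff)
  qed
  moreover have "spin s T ?L * spin s Q ?L = s"
    unfolding spin_def LT LQ by (simp add: vertical_domino_pair_iff is_domino_pair_iff)
  ultimately show ?thesis
    unfolding up_overlap_def by simp
qed

lemma down_overlap_diagonal:
  assumes yT: "young T" and yQ: "young Q" and x: "T - Q = {(i, Suc j)}" and y: "Q - T = {(Suc i, j)}"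
  shows "down_overlap s T Q = s"
proof -
  let ?w = "(i, j)"
  let ?N = "T - {(i, Suc j), ?w}"
  have xT: "(i, Suc j) \<in> T" and yQ': "(Suc i, j) \<in> Q" and xQ: "(i, Suc j) \<notin> Q" and yT': "(Suc i, j) \<notin> T"
    using x y by blast+
  then have zT: "(Suc i, Suc j) \<notin> T"
    using young_downward[OF yT, of "Suc i" "Suc j" "Suc i" j] by auto
  have wTQ: "?w \<in> T" "?w \<in> Q"
    using young_downward[OF yT xT] young_downward[OF yQ yQ'] by simp_all
  have N: "?N = T \<inter> Q - {?w}"
    using x by blast
  have TN: "T - ?N = {(i, Suc j), ?w}" and QN: "Q - ?N = {(Suc i, j), ?w}"
    using x y wTQ xT by blast+
  have "downs T \<inter> downs Q = {?N}"
  proof (intro equalityI subsetI)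
    fix N
    assume "N \<in> downs T \<inter> downs Q"
    then obtain w where "w \<in> T \<inter> Q" "N = T - {(i, Suc j), w}" "is_domino {(i, Suc j), w}"
      "is_domino {(Suc i, j), w}"
      using common_down_cell_apart[OF x y] by blast
    moreover from this have "w = ?w"
      using zT by (cases w) (auto simp: is_domino_pair_iff)
    ultimately show "N \<in> {?N}"
      by simp
  next
    fix N
    assume "N \<in> {?N}"
    moreover have "?N \<subseteq> T" "?N \<subseteq> Q"
      unfolding N by blast+
    ultimately show "N \<in> downs T \<inter> downs Q"
      using yT yQ young_diagonal_meet[OF yT yQ xQ yT'] TN QN
      by (simp add: N downs_def domino_step_def is_domino_pair_iff)
  qed
  moreover have "spin s ?N T * spin s ?N Q = s"
    unfolding spin_def TN QN by (simp add: vertical_domino_pair_iff is_domino_pair_iff)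
  ultimately show ?thesis
    unfolding down_overlap_def by simp
qed

lemma common_ups_downs_empty_far:
  assumes yT: "young T" and yQ: "young Q" and card: "card T = card Q" and far: "card (T \<inter> Q) + 3 \<le> card T"
  shows "ups T \<inter> ups Q = {}" and "downs T \<inter> downs Q = {}"
proof -
  have fin: "finite T" "finite Q"
    using yT yQ by (simp_all add: young_finite)
  show "ups T \<inter> ups Q = {}"
  proof (rule ccontr)
    assume "ups T \<inter> ups Q \<noteq> {}"
    then obtain L where L: "domino_step T L" "domino_step Q L"
      unfolding ups_def by blast
    then have "card (T \<union> Q) \<le> card L"
      by (intro card_mono) (auto simp: domino_step_def young_finite)
    then show False
      using domino_step_card[OF L(1)] card_Un_Int[OF fin] card far by linarith
  qed
  show "downs T \<inter> downs Q = {}"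
  proof (rule ccontr)
    assume "downs T \<inter> downs Q \<noteq> {}"
    then obtain N where N: "domino_step N T" "domino_step N Q"
      unfolding downs_def by blast
    then have "card N \<le> card (T \<inter> Q)"
      using fin by (intro card_mono) (auto simp: domino_step_def)
    then show False
      using domino_step_card[OF N(1)] far by linarith
  qed
qed

lemma common_ups_downs_two_apart:
  assumes yT: "young T" and yQ: "young Q" and card: "card T = card Q" and two: "card (T \<inter> Q) + 2 = card T"
  shows "ups T \<inter> ups Q \<subseteq> {T \<union> Q}" and "downs T \<inter> downs Q \<subseteq> {T \<inter> Q}"
proof -
  have fin: "finite T" "finite Q"
    using yT yQ by (simp_all add: young_finite)
  show "ups T \<inter> ups Q \<subseteq> {T \<union> Q}"
  proof
    fix L
    assume "L \<in> ups T \<inter> ups Q"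
    then have L: "domino_step T L" "domino_step Q L"
      unfolding ups_def by auto
    then have "T \<union> Q \<subseteq> L" "finite L"
      unfolding domino_step_def by (auto simp: young_finite)
    moreover have "card L = card (T \<union> Q)"
      using domino_step_card[OF L(1)] card_Un_Int[OF fin] card two by linarith
    ultimately show "L \<in> {T \<union> Q}"
      using card_seteq[of L "T \<union> Q"] by simp
  qed
  show "downs T \<inter> downs Q \<subseteq> {T \<inter> Q}"
  proof
    fix N
    assume "N \<in> downs T \<inter> downs Q"
    then have N: "domino_step N T" "domino_step N Q"
      unfolding downs_def by auto
    then have "N \<subseteq> T \<inter> Q"
      unfolding domino_step_def by auto
    moreover have "card (T \<inter> Q) \<le> card N"
      using domino_step_card[OF N(1)] two by linarith
    ultimately show "N \<in> {T \<inter> Q}"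
      using card_seteq[of "T \<inter> Q" N] fin by simp
  qed
qed

text \<open>If \<open>T - Q\<close> and \<open>Q - T\<close> are dominoes, both overlaps are the product of their spins;
  otherwise both vanish.\<close>
lemma up_overlap_eq_down_overlap_two_apart:
  assumes yT: "young T" and yQ: "young Q" and card: "card T = card Q" and two: "card (T \<inter> Q) + 2 = card T"
  shows "up_overlap s T Q = down_overlap s T Q"
proof -
  note ups = common_ups_downs_two_apart(1)[OF assms] and downs = common_ups_downs_two_apart(2)[OF assms]
  have diff: "(T \<union> Q) - T = Q - T" "(T \<union> Q) - Q = T - Q" "T - (T \<inter> Q) = T - Q" "Q - (T \<inter> Q) = Q - T"
    by auto
  have yU: "young (T \<union> Q)" and yI: "young (T \<inter> Q)"
    using young_Un young_Int yT yQ by auto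
  show ?thesis
  proof (cases "is_domino (Q - T) \<and> is_domino (T - Q)")
    case True
    then have "ups T \<inter> ups Q = {T \<union> Q}" "downs T \<inter> downs Q = {T \<inter> Q}"
      using ups downs yT yQ yU yI diff by (auto simp: ups_def downs_def domino_step_def)
    then show ?thesis
      by (simp add: up_overlap_def down_overlap_def spin_def diff)
  next
    case False
    then have "ups T \<inter> ups Q = {}" "downs T \<inter> downs Q = {}"
      using ups downs diff by (auto simp: ups_def downs_def domino_step_def)
    then show ?thesis
      unfolding up_overlap_def down_overlap_def by simp
  qed
qed

lemma up_overlap_eq_down_overlap_cell_apart:
  assumes yT: "young T" and yQ: "young Q" and x: "T - Q = {x}" and y: "Q - T = {y}"
  shows "up_overlap s T Q = down_overlap s T Q"
proof -
  have "x \<noteq> y" and "\<not> (fst x \<le> fst y \<and> snd x \<le> snd y)" and "\<not> (fst y \<le> fst x \<and> snd y \<le> snd x)"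
    using x y young_downward[OF yT, of "fst x" "snd x" "fst y" "snd y"]
      young_downward[OF yQ, of "fst y" "snd y" "fst x" "snd x"] by auto
  note incomparable = this
  consider (diag) i j where "x = (i, Suc j)" "y = (Suc i, j)" | (antidiag) i j where "y = (i, Suc j)" "x = (Suc i, j)"
    | (apart) "\<not> (\<exists>i j. x = (i, Suc j) \<and> y = (Suc i, j))" "\<not> (\<exists>i j. y = (i, Suc j) \<and> x = (Suc i, j))"
    by blast
  then show ?thesis
  proof cases
    case diag
    then have d: "T - Q = {(i, Suc j)}" "Q - T = {(Suc i, j)}"
      using x y by simp_all
    show ?thesis
      by (simp add: up_overlap_diagonal[OF yT yQ d] down_overlap_diagonal[OF yT yQ d])
  next
    case antidiag
    then have d: "Q - T = {(i, Suc j)}" "T - Q = {(Suc i, j)}"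
      using x y by simp_all
    show ?thesis
      by (metis up_overlap_diagonal[OF yQ yT d] down_overlap_diagonal[OF yQ yT d]
          up_overlap_commute down_overlap_commute)
  next
    case apart
    then have no_common: "\<not> (is_domino {x, z} \<and> is_domino {y, z})" for z
      using common_neighbour_diagonal[OF _ _ incomparable] by blast
    have "ups T \<inter> ups Q = {}"
      using common_up_cell_apart[OF x y] no_common by (metis IntE equals0I)
    moreover have "downs T \<inter> downs Q = {}"
      using common_down_cell_apart[OF x y] no_common by (metis IntE equals0I)
    ultimately show ?thesis
      unfolding up_overlap_def down_overlap_def by simp
  qed
qed

lemma up_overlap_eq_down_overlap:
  assumes yT: "young T" and yQ: "young Q" and ne: "T \<noteq> Q" and card: "card T = card Q"
  shows "up_overlap s T Q = down_overlap s T Q"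
proof -
  have fin: "finite T" "finite Q"
    using yT yQ by (simp_all add: young_finite)
  have "card (T \<inter> Q) < card T"
  proof (rule ccontr)
    assume "\<not> ?thesis"
    then have "card (T \<inter> Q) = card T"
      using card_mono[OF fin(1), of "T \<inter> Q"] by simp
    then have "T \<subseteq> Q"
      using card_subset_eq[OF fin(1), of "T \<inter> Q"] by blast
    then show False
      using card_subset_eq[OF fin(2)] card ne by blast
  qed
  then consider "card (T \<inter> Q) + 3 \<le> card T" | "card (T \<inter> Q) + 2 = card T" | "card (T \<inter> Q) + 1 = card T"
    by linarith
  then show ?thesis
  proof cases
    case 1
    then show ?thesis
      using common_ups_downs_empty_far[OF yT yQ card] by (simp add: up_overlap_def down_overlap_def)
  next
    case 2
    then show ?thesis
      using up_overlap_eq_down_overlap_two_apart[OF yT yQ card] by simp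
  next
    case 3
    then have "card (T - Q) = 1" "card (Q - T) = 1"
      using card_Diff_subset_Int[of T Q] card_Diff_subset_Int[of Q T] fin card
      by (simp_all add: Int_commute)
    then obtain x y where "T - Q = {x}" "Q - T = {y}"
      by (meson card_1_singletonE)
    then show ?thesis
      by (rule up_overlap_eq_down_overlap_cell_apart[OF yT yQ])
  qed
qed

section \<open>The commutation relation\<close>

definition diagrams :: "nat \<Rightarrow> cell set set" where
  "diagrams k = {S. young S \<and> card S = k}"

lemma finite_diagrams: "finite (diagrams k)"
proof -
  have "S \<subseteq> {..<k} \<times> {..<k}" if "S \<in> diagrams k" for S
  proof
    fix p
    assume "p \<in> S"
    obtain i j where p: "p = (i, j)"
      by (cases p)
    have y: "young S" and k: "card S = k"
      using that by (auto simp: diagrams_def)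
    have "(\<lambda>i'. (i', j)) ` {..i} \<subseteq> S" "(\<lambda>j'. (i, j')) ` {..j} \<subseteq> S"
      using young_downward[OF y] \<open>p \<in> S\<close> p by auto
    then have "card ((\<lambda>i'. (i', j)) ` {..i}) \<le> k" "card ((\<lambda>j'. (i, j')) ` {..j}) \<le> k"
      using k young_finite[OF y] by (metis card_mono)+
    then show "p \<in> {..<k} \<times> {..<k}"
      using p by (simp add: card_image inj_on_def)
  qed
  then have "diagrams k \<subseteq> Pow ({..<k} \<times> {..<k})"
    by blast
  then show ?thesis
    by (rule finite_subset) simp
qed

lemma young_of_diagrams: "S \<in> diagrams k \<Longrightarrow> young S"
  by (simp add: diagrams_def)

lemma self_in_diagrams: "young S \<Longrightarrow> S \<in> diagrams (card S)"
  by (simp add: diagrams_def)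

lemma downs_eq_filter_diagrams: "card S = k + 2 \<Longrightarrow> downs S = {P \<in> diagrams k. domino_step P S}"
  by (auto simp: downs_def diagrams_def dest: domino_step_card domino_step_young)

lemma ups_eq_filter_diagrams: "card P = k \<Longrightarrow> ups P = {S \<in> diagrams (k + 2). domino_step P S}"
  by (auto simp: ups_def diagrams_def dest: domino_step_card domino_step_young)

lemma sum_diagrams_mult_lower:
  "(\<Sum>S\<in>diagrams (k + 2). F S * lower s G S) = (\<Sum>P\<in>diagrams k. raise s F P * G P)"
proof -
  have "(\<Sum>S\<in>diagrams (k + 2). F S * lower s G S)
      = (\<Sum>S\<in>diagrams (k + 2). \<Sum>P\<in>{P \<in> diagrams k. domino_step P S}. F S * spin s P S * G P)"
    by (intro sum.cong refl)
      (simp add: lower_def downs_eq_filter_diagrams diagrams_def sum_distrib_left mult.assoc)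
  also have "\<dots> = (\<Sum>P\<in>diagrams k. \<Sum>S\<in>{S \<in> diagrams (k + 2). domino_step P S}. F S * spin s P S * G P)"
    by (rule sum.swap_restrict[OF finite_diagrams finite_diagrams])
  also have "\<dots> = (\<Sum>P\<in>diagrams k. raise s F P * G P)"
    by (intro sum.cong refl)
      (simp add: raise_def ups_eq_filter_diagrams diagrams_def sum_distrib_left mult_ac)
  finally show ?thesis .
qed

lemma raise_lower_eq_up_overlap:
  assumes "young T"
  shows "raise s (lower s F) T = (\<Sum>Q\<in>diagrams (card T). F Q * up_overlap s T Q)"
proof -
  have "raise s (lower s F) T
      = (\<Sum>P\<in>ups T. \<Sum>Q\<in>{Q \<in> diagrams (card T). domino_step Q P}. spin s T P * spin s Q P * F Q)"
    unfolding raise_def lower_def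
    by (intro sum.cong refl)
      (auto simp: ups_def downs_eq_filter_diagrams domino_step_card sum_distrib_left mult.assoc)
  also have "\<dots> = (\<Sum>Q\<in>diagrams (card T). \<Sum>P\<in>{P \<in> ups T. domino_step Q P}. spin s T P * spin s Q P * F Q)"
    by (rule sum.swap_restrict[OF finite_ups[OF assms] finite_diagrams])
  also have "\<dots> = (\<Sum>Q\<in>diagrams (card T). F Q * up_overlap s T Q)"
    unfolding up_overlap_def
    by (intro sum.cong refl) (auto simp: ups_def sum_distrib_left mult_ac Int_def)
  finally show ?thesis .
qed

lemma lower_raise_eq_down_overlap:
  "lower s (raise s F) T = (\<Sum>Q\<in>diagrams (card T). F Q * down_overlap s T Q)"
proof -
  have "lower s (raise s F) T
      = (\<Sum>N\<in>downs T. \<Sum>Q\<in>{Q \<in> diagrams (card T). domino_step N Q}. spin s N T * spin s N Q * F Q)"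
    unfolding raise_def lower_def
    by (intro sum.cong refl)
      (auto simp: downs_def ups_eq_filter_diagrams domino_step_card sum_distrib_left mult.assoc)
  also have "\<dots> = (\<Sum>Q\<in>diagrams (card T). \<Sum>N\<in>{N \<in> downs T. domino_step N Q}. spin s N T * spin s N Q * F Q)"
    by (rule sum.swap_restrict[OF finite_downs finite_diagrams])
  also have "\<dots> = (\<Sum>Q\<in>diagrams (card T). F Q * down_overlap s T Q)"
    unfolding down_overlap_def
    by (intro sum.cong refl) (auto simp: downs_def sum_distrib_left mult_ac Int_def)
  finally show ?thesis .
qed

text \<open>The domino analogue of the relation \<open>DU - UD = I\<close> of a differential poset.\<close>
lemma raise_lower_commute:
  assumes "young T"
  shows "raise s (lower s F) T = lower s (raise s F) T + (1 + s\<^sup>2) * F T"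
proof -
  have "up_overlap s T Q = down_overlap s T Q + (if Q = T then 1 + s\<^sup>2 else 0)" if "Q \<in> diagrams (card T)" for Q
    using that up_overlap_eq_down_overlap[OF assms, of Q s] sum_ups_spin_square[OF assms, of s]
    by (auto simp: diagrams_def up_overlap_def down_overlap_def)
  then have "raise s (lower s F) T
      = (\<Sum>Q\<in>diagrams (card T). F Q * down_overlap s T Q + (if Q = T then (1 + s\<^sup>2) * F T else 0))"
    unfolding raise_lower_eq_up_overlap[OF assms] by (intro sum.cong) (auto simp: algebra_simps)
  then show ?thesis
    using self_in_diagrams[OF assms] finite_diagrams
    by (simp add: sum.distrib lower_raise_eq_down_overlap)
qed

primrec tableau_sum :: "'a::comm_ring_1 \<Rightarrow> cell set \<Rightarrow> nat \<Rightarrow> cell set \<Rightarrow> 'a" where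
  "tableau_sum s D 0 = (\<lambda>S. if S = D then 1 else 0)"
| "tableau_sum s D (Suc n) = lower s (tableau_sum s D n)"

lemma lower_cong: "(\<And>P. P \<in> downs S \<Longrightarrow> F P = G P) \<Longrightarrow> lower s F S = lower s G S"
  unfolding lower_def by (intro sum.cong) auto

lemma lower_scale: "lower s (\<lambda>P. a * F P) S = a * lower s F S"
  unfolding lower_def by (simp add: sum_distrib_left mult_ac)

lemma raise_tableau_sum:
  assumes D: "downs D = {}" and T: "young T"
  shows "raise s (tableau_sum s D (Suc m)) T = of_nat (Suc m) * (1 + s\<^sup>2) * tableau_sum s D m T"
  using T
proof (induction m arbitrary: T)
  case 0
  have "raise s (tableau_sum s D 0) = (\<lambda>N. 0)"
    using D unfolding raise_def by (intro ext sum.neutral) (auto simp: ups_def downs_def)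
  then have "lower s (raise s (tableau_sum s D 0)) T = 0"
    by (simp add: lower_def)
  then show ?case
    using raise_lower_commute[OF 0, of s "tableau_sum s D 0"] by simp
next
  case (Suc m)
  let ?a = "of_nat (Suc m) * (1 + s\<^sup>2)"
  have "lower s (raise s (tableau_sum s D (Suc m))) T = lower s (\<lambda>N. ?a * tableau_sum s D m N) T"
    by (rule lower_cong) (simp add: downs_def domino_step_def Suc.IH del: tableau_sum.simps(2))
  also have "\<dots> = ?a * tableau_sum s D (Suc m) T"
    by (simp add: lower_scale)
  finally have "raise s (tableau_sum s D (Suc (Suc m))) T = ?a * tableau_sum s D (Suc m) T
      + (1 + s\<^sup>2) * tableau_sum s D (Suc m) T"
    using raise_lower_commute[OF Suc.prems, of s "tableau_sum s D (Suc m)"] by simp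
  then show ?case
    by (simp only: of_nat_Suc[of "Suc m"]) (simp add: algebra_simps del: tableau_sum.simps(2))
qed

definition total_weight :: "'a::comm_ring_1 \<Rightarrow> 'a \<Rightarrow> 'a \<Rightarrow> 'a \<Rightarrow> cell set \<Rightarrow> nat \<Rightarrow> 'a" where
  "total_weight x y c s D n = (\<Sum>S\<in>diagrams (card D + 2 * n). weight x y c S * tableau_sum s D n S)"

lemma total_weight_0: "young D \<Longrightarrow> total_weight x y c s D 0 = weight x y c D"
  by (simp add: total_weight_def self_in_diagrams finite_diagrams if_distrib cong: if_cong)

lemma total_weight_Suc:
  "total_weight x y c s D (Suc n) = (y\<^sup>2 + x\<^sup>2 * s) * total_weight x y c s D n
     + c * (\<Sum>P\<in>diagrams (card D + 2 * n). lower s (weight x y c) P * tableau_sum s D n P)"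
proof -
  have "total_weight x y c s D (Suc n)
      = (\<Sum>P\<in>diagrams (card D + 2 * n). raise s (weight x y c) P * tableau_sum s D n P)"
    unfolding total_weight_def using sum_diagrams_mult_lower[where k = "card D + 2 * n"] by simp
  also have "\<dots> = (\<Sum>P\<in>diagrams (card D + 2 * n). (y\<^sup>2 + x\<^sup>2 * s) * (weight x y c P * tableau_sum s D n P)
      + c * (lower s (weight x y c) P * tableau_sum s D n P))"
    by (intro sum.cong refl) (simp add: raise_weight young_of_diagrams algebra_simps)
  finally show ?thesis
    by (simp add: total_weight_def sum.distrib sum_distrib_left)
qed

lemma total_weight_1:
  assumes "young D" and "downs D = {}"
  shows "total_weight x y c s D 1 = (y\<^sup>2 + x\<^sup>2 * s) * weight x y c D"
  using total_weight_Suc[of x y c s D 0] assms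
  by (simp add: total_weight_0 lower_def finite_diagrams if_distrib cong: if_cong)

lemma total_weight_Suc_Suc:
  assumes "downs D = {}"
  shows "total_weight x y c s D (Suc (Suc m)) = (y\<^sup>2 + x\<^sup>2 * s) * total_weight x y c s D (Suc m)
           + of_nat (Suc m) * c * (1 + s\<^sup>2) * total_weight x y c s D m"
proof -
  have "(\<Sum>P\<in>diagrams (card D + 2 * m + 2). lower s (weight x y c) P * tableau_sum s D (Suc m) P)
      = (\<Sum>Q\<in>diagrams (card D + 2 * m). weight x y c Q * raise s (tableau_sum s D (Suc m)) Q)"
    using sum_diagrams_mult_lower[where k = "card D + 2 * m" and F = "tableau_sum s D (Suc m)"
        and s = s and G = "weight x y c"]
    by (simp add: mult.commute del: tableau_sum.simps(2))
  also have "\<dots> = of_nat (Suc m) * (1 + s\<^sup>2) * total_weight x y c s D m"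
    unfolding total_weight_def sum_distrib_left
    by (intro sum.cong refl)
      (simp add: raise_tableau_sum[OF assms] young_of_diagrams mult_ac del: tableau_sum.simps(2))
  finally show ?thesis
    using total_weight_Suc[of x y c s D "Suc m"] by (simp add: algebra_simps)
qed

section \<open>Partitions as lists\<close>

lemma mem_cells: "(i, j) \<in> cells lam \<longleftrightarrow> i < length lam \<and> j < lam ! i"
  by (simp add: cells_def)

lemma partition_antimono: "is_partition lam \<Longrightarrow> i \<le> i' \<Longrightarrow> i' < length lam \<Longrightarrow> lam ! i' \<le> lam ! i"
  unfolding is_partition_def by (metis le_eq_less_or_eq sorted_wrt_nth_less order_refl)

lemma partition_pos: "is_partition lam \<Longrightarrow> i < length lam \<Longrightarrow> 0 < lam ! i"
  unfolding is_partition_def by (metis gr0I nth_mem)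

lemma row_len_cells: "row_len (cells lam) i = (if i < length lam then lam ! i else 0)"
  by (rule row_len_eqI) (simp add: mem_cells)

lemma cells_eq_Sigma: "cells lam = (SIGMA i:{..<length lam}. {..<lam ! i})"
  by (auto simp: cells_def)

lemma card_cells: "card (cells lam) = sum_list lam"
  by (simp add: cells_eq_Sigma sum_list_sum_nth atLeast0LessThan)

lemma young_cells:
  assumes "is_partition lam"
  shows "young (cells lam)"
proof (rule young_by_row_len[where f = "\<lambda>i. if i < length lam then lam ! i else 0"])
  show "finite (cells lam)"
    by (simp add: cells_eq_Sigma)
  show "antimono (\<lambda>i. if i < length lam then lam ! i else 0)"
    by (rule antimonoI) (auto simp: partition_antimono[OF assms])
qed (simp add: mem_cells)

lemma cells_inj:
  assumes "is_partition lam" and "is_partition mu" and "cells lam = cells mu"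
  shows "lam = mu"
proof -
  have "i < length lam \<longleftrightarrow> i < length mu" for i
    using assms partition_pos[of lam i] partition_pos[of mu i] mem_cells[of i 0] by metis
  then have len: "length lam = length mu"
    by (metis linorder_neqE_nat less_irrefl)
  moreover have "lam ! i = mu ! i" if "i < length lam" for i
    using row_len_cells[of lam i] row_len_cells[of mu i] assms(3) len that by simp
  ultimately show ?thesis
    by (rule nth_equalityI)
qed

definition partition_of :: "cell set \<Rightarrow> nat list" where
  "partition_of S = map (row_len S) [0..<row_len (conjugate S) 0]"

lemma partition_of_correct:
  assumes y: "young S"
  shows "is_partition (partition_of S)" and "cells (partition_of S) = S"
proof -
  have nonempty_row: "i < row_len (conjugate S) 0 \<longleftrightarrow> 0 < row_len S i" for i
    using young_mem_iff_row_len[OF y, of i 0] young_mem_iff_row_len[of "conjugate S" 0 i] y by simp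
  have "sorted_wrt (\<ge>) (partition_of S)"
    unfolding partition_of_def sorted_wrt_map
    by (rule sorted_wrt_mono_rel[OF _ sorted_wrt_upt]) (meson less_imp_le row_len_antimono[OF y])
  moreover have "0 \<notin> set (partition_of S)"
  proof
    assume "0 \<in> set (partition_of S)"
    then obtain i where "i < row_len (conjugate S) 0" "row_len S i = 0"
      by (auto simp: partition_of_def)
    then show False
      using nonempty_row[of i] by simp
  qed
  ultimately show "is_partition (partition_of S)"
    by (simp add: is_partition_def)
  show "cells (partition_of S) = S"
  proof (rule set_eqI)
    fix p :: cell
    obtain i j where p: "p = (i, j)"
      by (cases p)
    have "(i, j) \<in> cells (partition_of S) \<longleftrightarrow> i < row_len (conjugate S) 0 \<and> j < row_len S i"
      by (auto simp: mem_cells partition_of_def)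
    also have "\<dots> \<longleftrightarrow> (i, j) \<in> S"
      using nonempty_row[of i] young_mem_iff_row_len[OF y] by auto
    finally show "p \<in> cells (partition_of S) \<longleftrightarrow> p \<in> S"
      using p by simp
  qed
qed

lemma partition_of_cells: "is_partition lam \<Longrightarrow> partition_of (cells lam) = lam"
  using cells_inj partition_of_correct young_cells by metis

lemma dom_step_iff_domino_step:
  "dom_step mu lam \<longleftrightarrow> is_partition mu \<and> is_partition lam \<and> domino_step (cells mu) (cells lam)"
  unfolding dom_step_def domino_step_def using young_cells by blast

lemma odd_parts_eq_odd_rows: "odd_parts lam = odd_rows (cells lam)"
proof -
  have "{i. odd (row_len (cells lam) i)} = {i. i < length lam \<and> odd (lam ! i)}"
    by (auto simp: row_len_cells)
  then show ?thesis
    by (simp add: odd_parts_def odd_rows_def length_filter_conv_card)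
qed

lemma cells_conj_part:
  assumes p: "is_partition lam"
  shows "cells (conj_part lam) = conjugate (cells lam)"
proof (rule set_eqI)
  fix q :: cell
  obtain j i where q: "q = (j, i)"
    by (cases q)
  have y: "young (cells lam)"
    using young_cells[OF p] .
  have "card {i. i < length lam \<and> j < lam ! i} = row_len (conjugate (cells lam)) j"
    by (simp add: row_len_def mem_cells)
  then have "(j, i) \<in> cells (conj_part lam)
      \<longleftrightarrow> j < (if lam = [] then 0 else hd lam) \<and> i < row_len (conjugate (cells lam)) j"
    unfolding mem_cells conj_part_def by auto
  also have "\<dots> \<longleftrightarrow> j < (if lam = [] then 0 else hd lam) \<and> (i, j) \<in> cells lam"
    using young_mem_iff_row_len[of "conjugate (cells lam)" j i] y by simp
  also have "\<dots> \<longleftrightarrow> (i, j) \<in> cells lam"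
    using partition_antimono[OF p, of 0 i] by (auto simp: mem_cells hd_conv_nth)
  finally show "q \<in> cells (conj_part lam) \<longleftrightarrow> q \<in> conjugate (cells lam)"
    using q by simp
qed

lemma odd_parts_conj_part: "is_partition lam \<Longrightarrow> odd_parts (conj_part lam) = odd_cols (cells lam)"
  by (simp add: odd_parts_eq_odd_rows cells_conj_part)

lemma card_odd_lessThan: "card {j. j < m \<and> odd j} = m div 2"
proof (induction m)
  case (Suc m)
  show ?case
  proof (cases "odd m")
    case True
    then have "{j. j < Suc m \<and> odd j} = insert m {j. j < m \<and> odd j}"
      by auto
    then show ?thesis
      using Suc True by (simp add: odd_pos)
  next
    case False
    then have "{j. j < Suc m \<and> odd j} = {j. j < m \<and> odd j}"
      using less_Suc_eq by auto
    then show ?thesis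
      using Suc False by simp
  qed
qed simp

lemma dstat_eq_odd_odd_cells: "dstat lam = odd_odd_cells (cells lam)"
proof -
  let ?A = "{i. i < length lam \<and> odd i}"
  have "cells lam \<inter> {p. odd (fst p) \<and> odd (snd p)} = (SIGMA i:?A. {j. j < lam ! i \<and> odd j})"
    by (auto simp: cells_def)
  then have "odd_odd_cells (cells lam) = (\<Sum>i\<in>?A. lam ! i div 2)"
    by (simp add: odd_odd_cells_def card_odd_lessThan)
  also have "?A = (\<lambda>k. 2 * k - 1) ` {1..length lam div 2}"
    by (auto simp: image_iff elim!: oddE intro!: bexI[where x = "_ + 1"])
  also have "(\<Sum>i\<in>(\<lambda>k. 2 * k - 1) ` {1..length lam div 2}. lam ! i div 2) = dstat lam"
    unfolding dstat_def by (rule sum.reindex_cong[where l = "\<lambda>k. 2 * k - 1"]) (auto simp: inj_on_def)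
  finally show ?thesis ..
qed

lemma length_delta [simp]: "length (delta r) = r"
  by (simp add: delta_def)

lemma delta_nth: "i < r \<Longrightarrow> delta r ! i = r - i"
  unfolding delta_def by (subst rev_nth) (simp_all del: upt_Suc add: nth_upt)

lemma is_partition_delta: "is_partition (delta r)"
proof -
  have "sorted_wrt (\<ge>) (delta r)"
    unfolding sorted_wrt_iff_nth_less by (auto simp: delta_nth)
  moreover have "0 \<notin> set (delta r)"
    by (simp add: delta_def)
  ultimately show ?thesis
    by (simp add: is_partition_def)
qed

lemma cells_delta: "cells (delta r) = {(i, j). i + j < r}"
  by (auto simp: cells_def delta_nth)

lemma conjugate_cells_delta: "conjugate (cells (delta r)) = cells (delta r)"
  by (auto simp: cells_delta)

lemma downs_cells_delta: "downs (cells (delta r)) = {}"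
proof -
  have "hor_removable (cells (delta r)) = {}"
    by (auto simp: hor_removable_def row_len_cells delta_nth)
  then show ?thesis
    using young_cells[OF is_partition_delta]
    by (simp add: downs_split downs_vert_conjugate downs_hor_eq conjugate_cells_delta)
qed

lemma not_dom_step_delta: "\<not> dom_step nu (delta r)"
  using downs_cells_delta[of r] by (auto simp: dom_step_iff_domino_step downs_def)

lemma dom_step_rtranclp_parity:
  assumes "dom_step\<^sup>*\<^sup>* mu lam"
  shows "even (odd_rows (cells mu) + odd_rows (cells lam)) \<and> even (odd_cols (cells mu) + odd_cols (cells lam))"
  using assms
proof (induction rule: rtranclp_induct)
  case (step lam nu)
  then show ?case
    using domino_step_parity[of "cells lam" "cells nu"] by (auto simp: dom_step_iff_domino_step)
qed simp

definition sdt_len :: "nat \<Rightarrow> nat list \<Rightarrow> nat \<Rightarrow> nat list list set" where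
  "sdt_len r lam n = {T \<in> sdt r lam. length T = Suc n}"

lemma sdt_nth:
  assumes T: "T \<in> sdt r lam" and k: "k < length T"
  shows "is_partition (T ! k) \<and> card (cells (T ! k)) = card (cells (delta r)) + 2 * k"
  using k
proof (induction k)
  case 0
  have "T \<noteq> []" "hd T = delta r"
    using T by (auto simp: sdt_def)
  then show ?case
    using is_partition_delta by (simp add: hd_conv_nth)
next
  case (Suc k)
  then have "dom_step (T ! k) (T ! Suc k)"
    using T by (auto simp: sdt_def)
  then show ?case
    using Suc domino_step_card by (auto simp: dom_step_iff_domino_step)
qed

lemma sdt_length:
  assumes T: "T \<in> sdt r lam" and lam: "lam \<in> P_set r n"
  shows "length T = Suc n"
proof -
  have ne: "T \<noteq> []" and "T ! (length T - 1) = lam"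
    using T by (auto simp: sdt_def last_conv_nth)
  then have "card (cells lam) = card (cells (delta r)) + 2 * (length T - 1)"
    using sdt_nth[OF T, of "length T - 1"] by simp
  moreover have "card (cells lam) = card (cells (delta r)) + 2 * n"
    using lam by (simp add: P_set_def card_cells)
  ultimately show ?thesis
    using ne by (cases T) auto
qed

lemma sdt_len_0: "sdt_len r lam 0 = (if lam = delta r then {[delta r]} else {})"
proof -
  have "T \<in> sdt_len r lam 0 \<longleftrightarrow> lam = delta r \<and> T = [delta r]" for T
  proof
    assume "T \<in> sdt_len r lam 0"
    then have "length T = 1" "hd T = delta r" "last T = lam"
      by (auto simp: sdt_len_def sdt_def)
    then show "lam = delta r \<and> T = [delta r]"
      by (cases T) auto
  qed (auto simp: sdt_len_def sdt_def)
  then show ?thesis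
    by auto
qed

lemma sdt_len_butlast:
  assumes "T \<in> sdt_len r lam (Suc n)"
  shows "butlast T \<in> sdt_len r (last (butlast T)) n" and "dom_step (last (butlast T)) lam"
    and "T = butlast T @ [lam]"
proof -
  have ne: "T \<noteq> []" and hd: "hd T = delta r" and last: "last T = lam" and len: "length T = Suc (Suc n)"
    and steps: "\<forall>k < length T - 1. dom_step (T ! k) (T ! Suc k)"
    using assms by (auto simp: sdt_len_def sdt_def)
  let ?T' = "butlast T"
  have nth': "k < length ?T' \<Longrightarrow> ?T' ! k = T ! k" for k
    by (simp add: nth_butlast)
  have len': "length ?T' = Suc n"
    using len by simp
  then have ne': "?T' \<noteq> []"
    by (metis Zero_not_Suc list.size(3))
  show "?T' \<in> sdt_len r (last ?T') n"
    using hd ne ne' len' steps nth' by (auto simp: sdt_len_def sdt_def hd_conv_nth)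
  have "dom_step (T ! n) (T ! Suc n)"
    using steps len by simp
  moreover have "T ! n = last ?T'"
    using nth'[of n] len' ne' by (simp add: last_conv_nth)
  moreover have "T ! Suc n = lam"
    using last len ne by (simp add: last_conv_nth)
  ultimately show "dom_step (last ?T') lam"
    by simp
  show "T = ?T' @ [lam]"
    using append_butlast_last_id[OF ne] last by simp
qed

lemma sdt_len_snoc:
  assumes mu: "dom_step mu lam" and T: "T \<in> sdt_len r mu n"
  shows "T @ [lam] \<in> sdt_len r lam (Suc n)"
proof -
  have ne: "T \<noteq> []" and last: "last T = mu" and len: "length T = Suc n"
    and steps: "\<forall>k < length T - 1. dom_step (T ! k) (T ! Suc k)"
    using T by (auto simp: sdt_len_def sdt_def)
  have "dom_step ((T @ [lam]) ! k) ((T @ [lam]) ! Suc k)" if "k < length T" for k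
  proof (cases "k < length T - 1")
    case True
    then have "Suc k < length T"
      by simp
    then show ?thesis
      using steps True by (simp add: nth_append)
  next
    case False
    then have "k = length T - 1"
      using that by simp
    then show ?thesis
      using mu last ne len by (simp add: nth_append last_conv_nth)
  qed
  then show ?thesis
    using T ne by (auto simp: sdt_len_def sdt_def)
qed

lemma sdt_len_Suc:
  "sdt_len r lam (Suc n) = (\<lambda>(mu, T). T @ [lam]) ` (SIGMA mu:{mu. dom_step mu lam}. sdt_len r mu n)"
proof (intro equalityI subsetI)
  fix T
  assume "T \<in> sdt_len r lam (Suc n)"
  then show "T \<in> (\<lambda>(mu, T). T @ [lam]) ` (SIGMA mu:{mu. dom_step mu lam}. sdt_len r mu n)"
    using sdt_len_butlast by (intro image_eqI[of _ _ "(last (butlast T), butlast T)"]) auto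
qed (auto intro: sdt_len_snoc)

lemma n_vertical_snoc:
  assumes ne: "T \<noteq> []"
  shows "n_vertical (T @ [lam])
    = n_vertical T + (if vertical_domino (cells lam - cells (last T)) then 1 else 0)"
proof -
  let ?m = "length T - 1"
  let ?V = "\<lambda>T k. vertical_domino (cells (T ! Suc k) - cells (T ! k))"
  have old: "?V (T @ [lam]) k = ?V T k" if "k < ?m" for k
  proof -
    have "Suc k < length T"
      using that by simp
    then show ?thesis
      by (simp add: nth_append)
  qed
  have new: "?V (T @ [lam]) ?m = vertical_domino (cells lam - cells (last T))"
    using ne by (simp add: nth_append last_conv_nth)
  have len: "length (T @ [lam]) - 1 = Suc ?m"
    using ne by simp
  have "{k. k < length (T @ [lam]) - 1 \<and> ?V (T @ [lam]) k}
      = {k. k < ?m \<and> ?V T k} \<union> (if vertical_domino (cells lam - cells (last T)) then {?m} else {})"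
    unfolding len using old new by (auto simp: less_Suc_eq)
  then show ?thesis
    unfolding n_vertical_def by (auto simp: card_insert_if)
qed

lemma sum_sdt_len_snoc:
  "(\<Sum>T\<in>sdt_len r mu n. s ^ n_vertical (T @ [lam]))
     = spin s (cells mu) (cells lam) * (\<Sum>T\<in>sdt_len r mu n. s ^ n_vertical T)"
proof -
  have "s ^ n_vertical (T @ [lam]) = spin s (cells mu) (cells lam) * s ^ n_vertical T"
    if "T \<in> sdt_len r mu n" for T
    using that n_vertical_snoc[of T lam] by (auto simp: sdt_len_def sdt_def spin_def power_add)
  then show ?thesis
    by (simp add: sum_distrib_left)
qed

lemma dom_steps_eq_partition_of_downs:
  assumes "is_partition lam"
  shows "{mu. dom_step mu lam} = partition_of ` downs (cells lam)"
proof (intro equalityI subsetI)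
  fix mu
  assume "mu \<in> {mu. dom_step mu lam}"
  then have "is_partition mu" and "cells mu \<in> downs (cells lam)"
    by (simp_all add: dom_step_iff_domino_step downs_def)
  then show "mu \<in> partition_of ` downs (cells lam)"
    by (intro image_eqI[where x = "cells mu"]) (simp_all add: partition_of_cells)
next
  fix mu
  assume "mu \<in> partition_of ` downs (cells lam)"
  then obtain P where "domino_step P (cells lam)" "mu = partition_of P"
    by (auto simp: downs_def)
  then show "mu \<in> {mu. dom_step mu lam}"
    using partition_of_correct assms by (auto simp: dom_step_iff_domino_step domino_step_def)
qed

lemma inj_on_partition_of: "inj_on partition_of (downs S)"
  unfolding inj_on_def downs_def domino_step_def by (metis partition_of_correct(2) mem_Collect_eq)

lemma sum_sdt_len:
  assumes "is_partition lam"
  shows "finite (sdt_len r lam n)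
    \<and> (\<Sum>T\<in>sdt_len r lam n. s ^ n_vertical T) = tableau_sum s (cells (delta r)) n (cells lam)"
  using assms
proof (induction n arbitrary: lam)
  case 0
  then show ?case
    using cells_inj[OF 0 is_partition_delta] by (auto simp: sdt_len_0 n_vertical_def)
next
  case (Suc n)
  let ?M = "{mu. dom_step mu lam}"
  let ?snoc = "\<lambda>(mu, T). T @ [lam]"
  have finM: "finite ?M"
    using dom_steps_eq_partition_of_downs[OF Suc.prems] finite_downs by simp
  have partM: "mu \<in> ?M \<Longrightarrow> is_partition mu" for mu
    by (simp add: dom_step_iff_domino_step)
  have fin: "finite (SIGMA mu:?M. sdt_len r mu n)"
    using finM Suc.IH partM by auto
  have inj: "inj_on ?snoc (SIGMA mu:?M. sdt_len r mu n)"
    by (rule inj_onI) (auto simp: sdt_len_def sdt_def)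
  have "(\<Sum>T\<in>sdt_len r lam (Suc n). s ^ n_vertical T)
      = (\<Sum>(mu, T)\<in>(SIGMA mu:?M. sdt_len r mu n). s ^ n_vertical (T @ [lam]))"
    unfolding sdt_len_Suc using inj by (simp add: sum.reindex case_prod_beta')
  also have "\<dots> = (\<Sum>mu\<in>?M. \<Sum>T\<in>sdt_len r mu n. s ^ n_vertical (T @ [lam]))"
    using finM Suc.IH partM by (subst sum.Sigma) auto
  also have "\<dots> = (\<Sum>mu\<in>?M. spin s (cells mu) (cells lam) * (\<Sum>T\<in>sdt_len r mu n. s ^ n_vertical T))"
    by (simp add: sum_sdt_len_snoc)
  also have "\<dots> = (\<Sum>mu\<in>?M. spin s (cells mu) (cells lam) * tableau_sum s (cells (delta r)) n (cells mu))"
    using Suc.IH partM by simp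
  also have "\<dots> = (\<Sum>P\<in>downs (cells lam).
      spin s (cells (partition_of P)) (cells lam) * tableau_sum s (cells (delta r)) n (cells (partition_of P)))"
    unfolding dom_steps_eq_partition_of_downs[OF Suc.prems]
    using inj_on_partition_of by (simp add: sum.reindex)
  also have "\<dots> = lower s (tableau_sum s (cells (delta r)) n) (cells lam)"
    unfolding lower_def
    by (intro sum.cong refl) (auto simp: downs_def domino_step_def partition_of_correct(2))
  finally show ?case
    using fin inj by (simp add: sdt_len_Suc)
qed

lemma dpoly_eq_tableau_sum:
  assumes "lam \<in> P_set r n"
  shows "dpoly s r lam = tableau_sum s (cells (delta r)) n (cells lam)"
proof -
  have "sdt r lam = sdt_len r lam n"
    using sdt_length[OF _ assms] by (auto simp: sdt_len_def)
  moreover have "is_partition lam"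
    using assms by (simp add: P_set_def)
  ultimately show ?thesis
    using sum_sdt_len[of lam r n s] by (simp add: dpoly_def)
qed

lemma tableau_sum_delta_nonzero:
  assumes "tableau_sum s (cells (delta r)) n S \<noteq> 0"
  shows "young S \<and> dom_step\<^sup>*\<^sup>* (delta r) (partition_of S)"
  using assms
proof (induction n arbitrary: S)
  case 0
  then show ?case
    using young_cells[OF is_partition_delta] partition_of_cells[OF is_partition_delta]
    by (simp split: if_splits)
next
  case (Suc n)
  then obtain P where P: "P \<in> downs S" and "spin s P S * tableau_sum s (cells (delta r)) n P \<noteq> 0"
    by (auto simp: lower_def elim: sum.not_neutral_contains_not_neutral)
  then have "tableau_sum s (cells (delta r)) n P \<noteq> 0"
    by auto
  then have IH: "dom_step\<^sup>*\<^sup>* (delta r) (partition_of P)"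
    using Suc.IH by blast
  have "domino_step P S"
    using P by (simp add: downs_def)
  then have "young S" and "dom_step (partition_of P) (partition_of S)"
    using partition_of_correct by (auto simp: dom_step_iff_domino_step domino_step_def)
  then show ?case
    using IH by simp
qed

lemma cells_P_set_subset_diagrams: "cells ` P_set r n \<subseteq> diagrams (card (cells (delta r)) + 2 * n)"
  using young_cells by (auto simp: P_set_def diagrams_def card_cells)

lemma tableau_sum_delta_support:
  assumes S: "S \<in> diagrams (card (cells (delta r)) + 2 * n)"
    and nz: "tableau_sum s (cells (delta r)) n S \<noteq> 0"
  shows "S \<in> cells ` P_set r n"
proof -
  have y: "young S" and reach: "dom_step\<^sup>*\<^sup>* (delta r) (partition_of S)"
    using tableau_sum_delta_nonzero[OF nz] by auto
  have "partition_of S \<in> P_set r n"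
    using S partition_of_correct[OF y] reach not_dom_step_delta card_cells[of "partition_of S"]
    by (auto simp: P_set_def has_two_core_def diagrams_def card_cells)
  then show ?thesis
    using partition_of_correct(2)[OF y] by (metis image_eqI)
qed

section \<open>A Hermite sequence and its exponential generating function\<close>

fun hermite_seq :: "'a::comm_ring_1 \<Rightarrow> 'a \<Rightarrow> nat \<Rightarrow> 'a" where
  "hermite_seq X Y 0 = 1"
| "hermite_seq X Y (Suc 0) = X"
| "hermite_seq X Y (Suc (Suc n)) = X * hermite_seq X Y (Suc n) + of_nat (Suc n) * Y * hermite_seq X Y n"

lemma hermite_seq_unique:
  assumes "f 0 = 1" and "f 1 = X" and "\<And>m. f (Suc (Suc m)) = X * f (Suc m) + of_nat (Suc m) * Y * f m"
  shows "f n = hermite_seq X Y n"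
  by (induction n rule: induct_nat_012) (simp_all add: assms(1,3) assms(2)[unfolded One_nat_def])

definition exp_coeff :: "'a::field_char_0 \<Rightarrow> nat \<Rightarrow> 'a" where
  "exp_coeff z i = z ^ i / fact i"

definition spread :: "(nat \<Rightarrow> 'a::zero) \<Rightarrow> nat \<Rightarrow> 'a" where
  "spread f m = (if even m then f (m div 2) else 0)"

lemma of_nat_mult_exp_coeff: "of_nat (Suc i) * exp_coeff z (Suc i) = z * exp_coeff z i"
  unfolding exp_coeff_def by (simp add: field_simps del: of_nat_Suc)

lemma of_nat_mult_spread_exp_coeff:
  "of_nat m * spread (exp_coeff (Y / 2)) m = (if 2 \<le> m then Y * spread (exp_coeff (Y / 2)) (m - 2) else 0)"
proof (cases "2 \<le> m \<and> even m")
  case True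
  then obtain p where m: "m = 2 * Suc p"
    by (metis dvd_def Suc_pred le_zero_eq mult_0_right not_gr_zero zero_neq_numeral)
  have "of_nat m * exp_coeff (Y / 2) (Suc p) = 2 * (of_nat (Suc p) * exp_coeff (Y / 2) (Suc p))"
    unfolding m by (simp only: of_nat_mult of_nat_numeral mult.assoc)
  also have "\<dots> = Y * exp_coeff (Y / 2) p"
    by (simp add: of_nat_mult_exp_coeff del: of_nat_Suc)
  finally show ?thesis
    using m by (simp add: spread_def)
next
  case False
  then show ?thesis
    by (auto simp: spread_def dest: odd_pos)
qed

definition hermite_coeff :: "'a::field_char_0 \<Rightarrow> 'a \<Rightarrow> nat \<Rightarrow> 'a" where
  "hermite_coeff X Y n = (\<Sum>i\<le>n. exp_coeff X i * spread (exp_coeff (Y / 2)) (n - i))"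

text \<open>The coefficient form of the differential equation \<open>F' = (X + Y t) F\<close> satisfied by
  \<open>F t = exp (X t + Y t\<^sup>2 / 2)\<close>.\<close>
lemma hermite_coeff_Suc:
  "of_nat (Suc n) * hermite_coeff X Y (Suc n) = X * hermite_coeff X Y n
     + Y * (\<Sum>i<n. exp_coeff X i * spread (exp_coeff (Y / 2)) (n - 1 - i))"
proof -
  let ?a = "exp_coeff X" and ?b = "spread (exp_coeff (Y / 2))"
  have split: "of_nat (Suc n) * (?a i * ?b (Suc n - i))
      = of_nat i * ?a i * ?b (Suc n - i) + ?a i * (of_nat (Suc n - i) * ?b (Suc n - i))" if "i \<le> Suc n" for i
  proof -
    have "(of_nat (Suc n) :: 'a) = of_nat i + of_nat (Suc n - i)"
      using that by (simp flip: of_nat_add)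
    then show ?thesis
      by (simp add: algebra_simps)
  qed
  have "(\<Sum>i\<le>Suc n. of_nat i * ?a i * ?b (Suc n - i)) = (\<Sum>i\<le>n. of_nat (Suc i) * ?a (Suc i) * ?b (n - i))"
    by (subst sum.atMost_Suc_shift) (simp del: of_nat_Suc)
  also have "\<dots> = X * hermite_coeff X Y n"
    by (simp add: hermite_coeff_def sum_distrib_left of_nat_mult_exp_coeff mult.assoc del: of_nat_Suc)
  finally have first: "(\<Sum>i\<le>Suc n. of_nat i * ?a i * ?b (Suc n - i)) = X * hermite_coeff X Y n" .
  have "(\<Sum>i\<le>Suc n. ?a i * (of_nat (Suc n - i) * ?b (Suc n - i)))
      = (\<Sum>i\<le>Suc n. if i < n then Y * (?a i * ?b (n - 1 - i)) else 0)"
  proof (intro sum.cong refl)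
    fix i
    assume "i \<in> {..Suc n}"
    then have "2 \<le> Suc n - i \<longleftrightarrow> i < n" and "Suc n - i - 2 = n - 1 - i"
      by auto
    then show "?a i * (of_nat (Suc n - i) * ?b (Suc n - i)) = (if i < n then Y * (?a i * ?b (n - 1 - i)) else 0)"
      by (simp add: of_nat_mult_spread_exp_coeff)
  qed
  also have "\<dots> = (\<Sum>i\<in>{i \<in> {..Suc n}. i < n}. Y * (?a i * ?b (n - 1 - i)))"
    by (rule sum.inter_filter[symmetric]) simp
  also have "{i \<in> {..Suc n}. i < n} = {..<n}"
    by auto
  finally have second: "(\<Sum>i\<le>Suc n. ?a i * (of_nat (Suc n - i) * ?b (Suc n - i)))
      = Y * (\<Sum>i<n. ?a i * ?b (n - 1 - i))"
    by (simp add: sum_distrib_left)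
  have "of_nat (Suc n) * hermite_coeff X Y (Suc n)
      = (\<Sum>i\<le>Suc n. of_nat i * ?a i * ?b (Suc n - i)) + (\<Sum>i\<le>Suc n. ?a i * (of_nat (Suc n - i) * ?b (Suc n - i)))"
    unfolding hermite_coeff_def sum_distrib_left sum.distrib[symmetric] by (intro sum.cong refl split) simp
  then show ?thesis
    by (simp only: first second)
qed

lemma hermite_seq_eq_fact_coeff: "hermite_seq X Y n = fact n * hermite_coeff X Y n"
proof (rule hermite_seq_unique[symmetric])
  show "fact 0 * hermite_coeff X Y 0 = 1" and "fact 1 * hermite_coeff X Y 1 = X"
    by (simp_all add: hermite_coeff_def exp_coeff_def spread_def)
  fix m
  have "fact (Suc (Suc m)) * hermite_coeff X Y (Suc (Suc m))
      = fact (Suc m) * (of_nat (Suc (Suc m)) * hermite_coeff X Y (Suc (Suc m)))"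
    by (simp add: algebra_simps del: of_nat_Suc)
  also have "\<dots> = X * (fact (Suc m) * hermite_coeff X Y (Suc m)) + of_nat (Suc m) * Y * (fact m * hermite_coeff X Y m)"
    unfolding hermite_coeff_Suc by (simp add: hermite_coeff_def lessThan_Suc_atMost algebra_simps del: of_nat_Suc)
  finally show "fact (Suc (Suc m)) * hermite_coeff X Y (Suc (Suc m))
      = X * (fact (Suc m) * hermite_coeff X Y (Suc m)) + of_nat (Suc m) * Y * (fact m * hermite_coeff X Y m)" .
qed

lemma exp_coeff_sums: "exp_coeff z sums exp (z::'a::{real_normed_field,banach})"
  using exp_converges[of z] by (simp add: exp_coeff_def[abs_def] scaleR_conv_of_real divide_inverse mult.commute)

lemma norm_exp_coeff: "norm (exp_coeff z i) = exp_coeff (norm (z::'a::{real_normed_field,banach})) i"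
  by (simp add: exp_coeff_def norm_divide norm_power)

lemma exp_coeff_mult: "exp_coeff (z * t) i = t ^ i * exp_coeff z i"
  by (simp add: exp_coeff_def power_mult_distrib)

lemma spread_exp_coeff_mult: "spread (exp_coeff (Y * t\<^sup>2 / 2)) m = t ^ m * spread (exp_coeff (Y / 2)) m"
proof (cases "even m")
  case True
  then have "t ^ m = (t\<^sup>2) ^ (m div 2)"
    by (simp add: power_mult[symmetric])
  then show ?thesis
    using True by (simp add: spread_def exp_coeff_def power_mult_distrib field_simps)
qed (simp add: spread_def)

lemma sums_spread:
  assumes "f sums L"
  shows "spread f sums L"
proof -
  have "strict_mono (\<lambda>k::nat. 2 * k)"
    by (rule strict_monoI) simp
  moreover have "spread f m = 0" if "m \<notin> range (\<lambda>k. 2 * k)" for m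
    using that by (auto simp: spread_def)
  moreover have "(\<lambda>k. spread f (2 * k)) sums L"
    using assms by (simp add: spread_def)
  ultimately show ?thesis
    using sums_mono_reindex by blast
qed

lemma hermite_seq_sums:
  fixes X Y t :: "'a::{real_normed_field,banach}"
  shows "(\<lambda>n. hermite_seq X Y n * t ^ n / fact n) sums exp (X * t + Y * t\<^sup>2 / 2)"
proof -
  let ?a = "exp_coeff (X * t)" and ?b = "spread (exp_coeff (Y * t\<^sup>2 / 2))"
  have na: "summable (\<lambda>i. norm (?a i))"
    using exp_coeff_sums[of "norm (X * t)"] by (auto simp: norm_exp_coeff summable_def)
  have "(\<lambda>m. norm (?b m)) = spread (exp_coeff (norm (Y * t\<^sup>2 / 2)))"
    by (auto simp: spread_def norm_exp_coeff)
  then have nb: "summable (\<lambda>m. norm (?b m))"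
    using sums_spread[OF exp_coeff_sums[of "norm (Y * t\<^sup>2 / 2)"]] by (metis summable_def)
  have "(\<lambda>k. \<Sum>i\<le>k. ?a i * ?b (k - i)) sums ((\<Sum>k. ?a k) * (\<Sum>k. ?b k))"
    by (rule Cauchy_product_sums[OF na nb])
  moreover have "(\<Sum>k. ?a k) = exp (X * t)" and "(\<Sum>k. ?b k) = exp (Y * t\<^sup>2 / 2)"
    by (rule sums_unique[symmetric], rule exp_coeff_sums)
      (rule sums_unique[symmetric], rule sums_spread, rule exp_coeff_sums)
  moreover have "(\<Sum>i\<le>k. ?a i * ?b (k - i)) = hermite_seq X Y k * t ^ k / fact k" for k
  proof -
    have "?a i * ?b (k - i) = t ^ k * (exp_coeff X i * spread (exp_coeff (Y / 2)) (k - i))" if "i \<le> k" for i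
      using that by (simp add: exp_coeff_mult spread_exp_coeff_mult mult_ac flip: power_add)
    then have "(\<Sum>i\<le>k. ?a i * ?b (k - i)) = t ^ k * hermite_coeff X Y k"
      by (simp add: hermite_coeff_def sum_distrib_left)
    then show ?thesis
      by (simp add: hermite_seq_eq_fact_coeff)
  qed
  ultimately show ?thesis
    by (simp add: exp_add)
qed

lemma power_int_half:
  fixes x :: "'a::field"
  assumes "x \<noteq> 0" and "even (m + k)"
  shows "(x\<^sup>2) powi ((int m - int k) div 2) = x ^ m / x ^ k"
proof -
  have "2 * ((int m - int k) div 2) = int m - int k"
    using assms(2) by presburger
  then have "(x\<^sup>2) powi ((int m - int k) div 2) = x powi (int m - int k)"
    by (metis power_int_mult power_int_of_nat of_nat_numeral)
  also have "\<dots> = x ^ m / x ^ k"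
    using assms(1) by (simp add: power_int_diff)
  finally show ?thesis .
qed

lemma hfun_summand_eq_weight_ratio:
  fixes x y c :: "'a::field"
  assumes "x \<noteq> 0" and "y \<noteq> 0" and "c \<noteq> 0" and lam: "lam \<in> P_set r n"
  shows "(x\<^sup>2) powi ((int (odd_parts lam) - int (odd_parts (delta r))) div 2) *
      (y\<^sup>2) powi ((int (odd_parts (conj_part lam)) - int (odd_parts (delta r))) div 2) *
      c powi (int (dstat lam) - int (dstat (delta r)))
    = weight x y c (cells lam) / weight x y c (cells (delta r))"
proof -
  let ?D = "cells (delta r)" and ?C = "cells lam"
  have p: "is_partition lam" and reach: "dom_step\<^sup>*\<^sup>* (delta r) lam"
    using lam by (auto simp: P_set_def has_two_core_def)
  have parity: "even (odd_rows ?D + odd_rows ?C)" "even (odd_cols ?D + odd_cols ?C)"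
    using dom_step_rtranclp_parity[OF reach] by auto
  have delta_cols: "odd_cols ?D = odd_rows ?D"
    by (metis odd_rows_conjugate conjugate_cells_delta)
  show ?thesis
    unfolding odd_parts_conj_part[OF p]
    using power_int_half[OF assms(1) parity(1)[unfolded add.commute[of "odd_rows ?D"]]]
      power_int_half[OF assms(2) parity(2)[unfolded add.commute[of "odd_cols ?D"]]]
      power_int_diff[OF disjI1[OF assms(3)], of "int (odd_odd_cells ?C)" "int (odd_odd_cells ?D)"]
    by (simp add: weight_def odd_parts_eq_odd_rows dstat_eq_odd_odd_cells delta_cols)
qed

lemma hfun_eq_total_weight:
  fixes a b c s x y :: complex
  assumes ab: "a = x\<^sup>2" "b = y\<^sup>2" and nz: "x \<noteq> 0" "y \<noteq> 0" "c \<noteq> 0"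
  shows "hfun a b c s r n = total_weight x y c s (cells (delta r)) n / weight x y c (cells (delta r))"
proof -
  let ?D = "cells (delta r)"
  let ?g = "\<lambda>S. weight x y c S * tableau_sum s ?D n S"
  have "hfun a b c s r n = (\<Sum>lam\<in>P_set r n. ?g (cells lam)) / weight x y c ?D"
    unfolding hfun_def ab sum_divide_distrib
    by (intro sum.cong refl) (simp add: hfun_summand_eq_weight_ratio[OF nz] dpoly_eq_tableau_sum)
  also have "(\<Sum>lam\<in>P_set r n. ?g (cells lam)) = (\<Sum>S\<in>cells ` P_set r n. ?g S)"
  proof -
    have "inj_on cells (P_set r n)"
      using cells_inj by (intro inj_onI) (auto simp: P_set_def)
    then show ?thesis
      by (simp add: sum.reindex)
  qed
  also have "\<dots> = (\<Sum>S\<in>diagrams (card ?D + 2 * n). ?g S)"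
  proof (rule sum.mono_neutral_left[OF finite_diagrams cells_P_set_subset_diagrams], intro ballI)
    fix S
    assume "S \<in> diagrams (card ?D + 2 * n) - cells ` P_set r n"
    then show "?g S = 0"
      using tableau_sum_delta_support[of S r n s] by auto
  qed
  finally show ?thesis
    by (simp add: total_weight_def)
qed

lemma hfun_eq_hermite_seq:
  fixes a b c s :: complex
  assumes "a \<noteq> 0" and "b \<noteq> 0" and "c \<noteq> 0"
  shows "hfun a b c s r n = hermite_seq (b + a * s) (c * (1 + s\<^sup>2)) n"
proof -
  define x where "x = csqrt a"
  define y where "y = csqrt b"
  let ?D = "cells (delta r)"
  have ab: "a = x\<^sup>2" "b = y\<^sup>2" and nz: "x \<noteq> 0" "y \<noteq> 0"
    using assms by (auto simp: x_def y_def)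
  have yD: "young ?D" and dD: "downs ?D = {}"
    by (simp_all add: young_cells is_partition_delta downs_cells_delta)
  have w: "weight x y c ?D \<noteq> 0"
    using nz assms(3) by (simp add: weight_def)
  show ?thesis
    unfolding hfun_eq_total_weight[OF ab nz assms(3)]
  proof (rule hermite_seq_unique)
    show "total_weight x y c s ?D 0 / weight x y c ?D = 1"
      using w by (simp add: total_weight_0[OF yD])
    show "total_weight x y c s ?D 1 / weight x y c ?D = b + a * s"
      using w total_weight_1[OF yD dD, of x y c s] by (simp add: ab)
    show "total_weight x y c s ?D (Suc (Suc m)) / weight x y c ?D
        = (b + a * s) * (total_weight x y c s ?D (Suc m) / weight x y c ?D)
          + of_nat (Suc m) * (c * (1 + s\<^sup>2)) * (total_weight x y c s ?D m / weight x y c ?D)" for m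
      by (simp add: total_weight_Suc_Suc[OF dD] ab add_divide_distrib mult_ac)
  qed
qed

theorem proposition3p14:
  fixes a b c s :: complex
  assumes "a \<noteq> 0" "b \<noteq> 0" "c \<noteq> 0" "s \<noteq> 0"
  shows "(\<forall>r n. hfun a b c s r n = hfun a b c s 0 n) \<and>
         (\<forall>r. hfun a b c s r 0 = 1) \<and>
         (\<forall>r. hfun a b c s r 1 = b + a * s) \<and>
         (\<forall>r n. n \<ge> 1 \<longrightarrow> hfun a b c s r (n + 1) =
              (b + a * s) * hfun a b c s r n + of_nat n * c * (1 + s\<^sup>2) * hfun a b c s r (n - 1)) \<and>
         (\<forall>r t. (\<lambda>n. hfun a b c s r n * t ^ n / fact n) sums
              exp ((b + a * s) * t + c * (1 + s\<^sup>2) * t\<^sup>2 / 2))"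
proof -
  have h: "hfun a b c s r n = hermite_seq (b + a * s) (c * (1 + s\<^sup>2)) n" for r n
    using hfun_eq_hermite_seq assms(1-3) by blast
  have "hfun a b c s r (n + 1) = (b + a * s) * hfun a b c s r n + of_nat n * c * (1 + s\<^sup>2) * hfun a b c s r (n - 1)"
    if "n \<ge> 1" for r n
    using that by (cases n) (simp_all add: h mult.assoc)
  then show ?thesis
    using hermite_seq_sums[of "b + a * s" "c * (1 + s\<^sup>2)"] by (simp add: h)
qed

end
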